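(* Let $n\ge 3$. For the Grassmannian ${\rm Gr}(3,n)$, the block diagonal matching field polytopes $P_{\mathcal{B}_0}$ and $P_{\mathcal{B}_1}$ can be obtained from one another by a sequence of combinatorial mutations.
   Context: For $k=3$: for each $3$-subset $I=\{i_1<i_2<i_3\}$ of $[n]$ a matching field assigns $\sigma=\Lambda(I)\in S_3$; its polytope $P_\Lambda\subset\mathbb{R}^{3\times n}$ is the convex hull of the vectors $\sum_{r=1}^3 e_{\sigma(r),i_r}$ ($e_{i,j}$ the standard basis matrices). For $0\le\ell\le n$, the block diagonal matching field $\mathcal{B}_\ell$ has $\mathcal{B}_\ell(I)=\mathrm{id}$ if $|I\cap\{1,\dots,\ell\}|\ne1$ and $(12)$ otherwise. Combinatorial mutation: with $N\cong\mathbb{Z}^d$, $M$ its dual, $w\in M$ primitive and $F\subset w^\perp\subset N_\mathbb{R}$ a lattice polytope, the tropical map is $\varphi_{w,F}(u)=u-(\min_{f\in F}\langle f,u\rangle)w$; if $P\subset M_\mathbb{R}$ is a lattice polytope containing the origin and $\varphi_{w,F}(P)$ is convex, it is a combinatorial mutation of $P$. A sequence of combinatorial mutations is a finite chain of polytopes in which consecutive polytopes are related, after identification via lattice-preserving affine isomorphisms (unimodular equivalences) of the lattices they span, either by a unimodular equivalence or by a combinatorial mutation. *)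

theory Defs
  imports "HOL-Analysis.Analysis" "HOL-Analysis.Finite_Function_Topology"
    "HOL-Combinatorics.Transposition"
begin

text \<open>Points of the real vector spaces R^d are finitely supported functions
  finitely supported real functions on nat; R^d is the set of those supported in {0..<d}.\<close>

type_synonym pt = "nat \<Rightarrow>\<^sub>0 real"

definition rsp :: "nat \<Rightarrow> pt set" where
  "rsp d = {x. \<forall>i\<ge>d. Poly_Mapping.lookup x i = 0}"

definition intpt :: "pt \<Rightarrow> bool" where
  "intpt x \<longleftrightarrow> (\<forall>i. Poly_Mapping.lookup x i \<in> \<int>)"

definition lat :: "nat \<Rightarrow> pt set" where
  "lat d = {x \<in> rsp d. intpt x}"

definition lattice_polytope_in :: "nat \<Rightarrow> pt set \<Rightarrow> bool" where
  "lattice_polytope_in d P \<longleftrightarrow>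
     (\<exists>V. finite V \<and> V \<noteq> {} \<and> V \<subseteq> lat d \<and> P = convex hull V)"

definition lattice_polytope :: "pt set \<Rightarrow> bool" where
  "lattice_polytope P \<longleftrightarrow> (\<exists>d. lattice_polytope_in d P)"

definition alat :: "pt set \<Rightarrow> pt set" where
  "alat P = {x. \<exists>S c. finite S \<and> S \<subseteq> {v \<in> P. intpt v} \<and>
                 (\<forall>v\<in>S. c v \<in> \<int>) \<and> sum c S = 1 \<and> x = (\<Sum>v\<in>S. c v *\<^sub>R v)}"

definition unimod_equiv :: "pt set \<Rightarrow> pt set \<Rightarrow> bool" where
  "unimod_equiv P Q \<longleftrightarrow>
     (\<exists>f b. linear f \<and> bij_betw (\<lambda>x. f x + b) (alat P) (alat Q) \<and>
            (\<lambda>x. f x + b) ` P = Q)"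

definition pair :: "nat \<Rightarrow> pt \<Rightarrow> pt \<Rightarrow> real" where
  "pair d f u = (\<Sum>i<d. Poly_Mapping.lookup f i * Poly_Mapping.lookup u i)"

definition primitive :: "nat \<Rightarrow> pt \<Rightarrow> bool" where
  "primitive d w \<longleftrightarrow> w \<in> lat d \<and> w \<noteq> 0 \<and>
     (\<forall>v\<in>lat d. \<forall>k::nat. w = real k *\<^sub>R v \<longrightarrow> k = 1)"

definition trop_map :: "nat \<Rightarrow> pt \<Rightarrow> pt set \<Rightarrow> pt \<Rightarrow> pt" where
  "trop_map d w F u = u - (Inf ((\<lambda>f. pair d f u) ` F)) *\<^sub>R w"

definition comb_mutation :: "nat \<Rightarrow> pt set \<Rightarrow> pt set \<Rightarrow> bool" where
  "comb_mutation d Q Q' \<longleftrightarrow>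
     lattice_polytope_in d Q \<and> 0 \<in> Q \<and>
     (\<exists>w F. primitive d w \<and> lattice_polytope_in d F \<and>
            (\<forall>f\<in>F. pair d f w = 0) \<and>
            convex (trop_map d w F ` Q) \<and> Q' = trop_map d w F ` Q)"

text \<open>P' arises from P by a combinatorial mutation after identifying the lattice
  spanned by P with M = Z^d (and the lattice spanned by P' with that of the image).\<close>
definition mutation_step :: "pt set \<Rightarrow> pt set \<Rightarrow> bool" where
  "mutation_step P P' \<longleftrightarrow>
     (\<exists>d Q Q'. alat Q = lat d \<and> unimod_equiv P Q \<and> comb_mutation d Q Q' \<and>
               unimod_equiv P' Q')"

definition related :: "pt set \<Rightarrow> pt set \<Rightarrow> bool" where
  "related P P' \<longleftrightarrow> unimod_equiv P P' \<or> mutation_step P P' \<or> mutation_step P' P"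

definition mutation_sequence_equiv :: "pt set \<Rightarrow> pt set \<Rightarrow> bool" where
  "mutation_sequence_equiv P P' \<longleftrightarrow>
     (\<exists>Ps. Ps \<noteq> [] \<and> hd Ps = P \<and> last Ps = P' \<and>
           (\<forall>Q\<in>set Ps. lattice_polytope Q) \<and>
           (\<forall>i. Suc i < length Ps \<longrightarrow> related (Ps ! i) (Ps ! Suc i)))"

text \<open>Matching fields for k = 3.  Rows 1,2,3 and columns 1..n are 0-based; the
  matrix entry (i,j) of R^{3 x n} is coordinate i*n + j.  A 3-subset I of [n] is
  a 3-subset of {0..<n}; i_r is the r-th smallest element (r = 0,1,2); a
  permutation of S_3 is a permutation of {0,1,2}.\<close>

definition emat :: "nat \<Rightarrow> nat \<Rightarrow> nat \<Rightarrow> pt" where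
  "emat n i j = Poly_Mapping.single (i * n + j) 1"

definition mf_vertex :: "nat \<Rightarrow> (nat \<Rightarrow> nat) \<Rightarrow> nat set \<Rightarrow> pt" where
  "mf_vertex n \<sigma> I = (\<Sum>r<3. emat n (\<sigma> r) (sorted_list_of_set I ! r))"

definition matching_field_polytope :: "nat \<Rightarrow> (nat set \<Rightarrow> (nat \<Rightarrow> nat)) \<Rightarrow> pt set" where
  "matching_field_polytope n \<Lambda> =
     convex hull {mf_vertex n (\<Lambda> I) I | I. I \<subseteq> {0..<n} \<and> card I = 3}"

text \<open>Block diagonal matching field B_l: I \<inter> {1..l} in 1-based terms is
  I \<inter> {0..<l} here; (12) is the transposition of rows 0 and 1.\<close>
definition block_mf :: "nat \<Rightarrow> nat set \<Rightarrow> (nat \<Rightarrow> nat)" where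
  "block_mf l I = (if card (I \<inter> {0..<l}) \<noteq> 1 then id else Transposition.transpose (0::nat) 1)"

end

theory Submission
  imports Defs
begin

text \<open>Write \<open>n = m + 3\<close>. Row-wise tail sums, shifted so that the column positions \<open>p < q < r\<close>
  of a vertex become lengths in \<open>{0..m}\<close>, identify \<open>P\<^bsub>B\<^sub>0\<^esub>\<close> unimodularly with the polytope
  \<open>H\<^sub>0 \<subseteq> \<real>\<^bsup>3m\<^esup>\<close> of points whose three rows \<open>x, y, z\<close> are decreasing with entries in \<open>[0, 1]\<close> and
  satisfy \<open>x \<le> y \<le> z\<close>. This is an order polytope, whose vertices are the 0/1 staircases.

  For \<open>k < m\<close>, the tropical map with \<open>w = -(e(y\<^sub>0) + \<dots> + e(y\<^sub>k))\<close> and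
  \<open>F = conv {0, e(y\<^sub>k\<^sub>+\<^sub>1) - e(x\<^sub>k)}\<close> lowers \<open>y\<^sub>0, \<dots>, y\<^sub>k\<close> by \<open>max 0 (x\<^sub>k - y\<^sub>k\<^sub>+\<^sub>1)\<close>. It maps
  \<open>H\<^sub>k\<close> onto the polytope \<open>H\<^sub>k\<^sub>+\<^sub>1\<close> in which \<open>x\<^sub>k \<le> y\<^sub>k\<close> is traded for
  \<open>x\<^sub>k + y\<^sub>i \<le> z\<^sub>i + y\<^sub>k\<^sub>+\<^sub>1\<close> (\<open>i \<le> k\<close>), so it is a combinatorial mutation.

  The composite of the \<open>m\<close> mutations is linear on each cone where the signs of the gaps
  \<open>y\<^sub>k\<^sub>+\<^sub>1 - x\<^sub>k\<close> are fixed. Every point of \<open>H\<^sub>0\<close> is a convex combination of staircases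
  comonotone with it, which lie in the same cone. Hence \<open>H\<^sub>m\<close> is the convex hull of the images of the
  staircases. A staircase moves only if its first two rows have equal length, and then its middle row
  is emptied. The resulting vertices are, under the same tail sums with the first row shifted once
  more, exactly those of \<open>P\<^bsub>B\<^sub>1\<^esub>\<close>.\<close>

abbreviation coord :: "pt \<Rightarrow> nat \<Rightarrow> real" where
  "coord \<equiv> Poly_Mapping.lookup"

lemma lookup_scaleR [simp]: "coord (r *\<^sub>R x) i = r * coord x i"
proof -
  have "finite {i. r * coord x i \<noteq> 0}"
    by (rule finite_subset[OF _ finite_lookup[of x]]) auto
  then show ?thesis
    unfolding scaleR_poly_mapping_def by simp
qed

declare lookup_add [simp] lookup_minus [simp] lookup_sum [simp]

lemma linear_coord: "linear (\<lambda>u. coord u i)"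
  by (rule linearI) simp_all

definition pt_of :: "(nat \<Rightarrow> real) \<Rightarrow> nat \<Rightarrow> pt" where
  "pt_of F N = Abs_poly_mapping (\<lambda>k. if k < N then F k else 0)"

lemma coord_pt_of [simp]: "coord (pt_of F N) k = (if k < N then F k else 0)"
proof -
  have "finite {k. (if k < N then F k else 0) \<noteq> 0}"
    by (rule finite_subset[of _ "{..<N}"]) auto
  then show ?thesis
    unfolding pt_of_def by simp
qed

lemma pt_of_in_rsp [simp]: "pt_of F N \<in> rsp N"
  by (simp add: rsp_def)

lemma coord_eq_0_if_rsp: "u \<in> rsp N \<Longrightarrow> N \<le> i \<Longrightarrow> coord u i = 0"
  by (simp add: rsp_def)

lemma three_rows_cases:
  fixes k n :: nat
  assumes "k < 3 * n"
  obtains (x) i where "i < n" "k = i" | (y) i where "i < n" "k = n + i" | (z) i where "i < n" "k = 2 * n + i"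
proof -
  consider "k < n" | "n \<le> k" "k < 2 * n" | "2 * n \<le> k"
    by linarith
  then show ?thesis
  proof cases
    case 2
    then show ?thesis using y[of "k - n"] by simp
  next
    case 3
    then show ?thesis using z[of "k - 2 * n"] assms by simp
  qed (use x in simp)
qed

lemma rsp_three_rows_eqI:
  assumes "u \<in> rsp (3 * n)" "v \<in> rsp (3 * n)"
    and "\<And>i. i < n \<Longrightarrow> coord u i = coord v i \<and> coord u (n + i) = coord v (n + i) \<and>
                          coord u (2 * n + i) = coord v (2 * n + i)"
  shows "u = v"
proof (rule poly_mapping_eqI)
  fix k
  show "coord u k = coord v k"
  proof (cases "k < 3 * n")
    case True
    then show ?thesis
      by (cases rule: three_rows_cases) (use assms(3) in auto)
  qed (use assms(1,2) coord_eq_0_if_rsp in auto)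
qed

lemma convex_le_linear:
  fixes f g :: "pt \<Rightarrow> real"
  assumes "linear f" "linear g"
  shows "convex {x. f x \<le> g x}"
  unfolding convex_def
proof (intro CollectI ballI allI impI)
  fix x y and a b :: real
  assume "x \<in> {x. f x \<le> g x}" "y \<in> {x. f x \<le> g x}" "0 \<le> a" "0 \<le> b" "a + b = 1"
  then have "a * f x + b * f y \<le> a * g x + b * g y"
    by (intro add_mono mult_left_mono) simp_all
  then show "f (a *\<^sub>R x + b *\<^sub>R y) \<le> g (a *\<^sub>R x + b *\<^sub>R y)"
    using assms by (simp add: linear_add linear_scale)
qed

lemma convex_coord_le: "convex {u. coord u a \<le> coord u b}"
  by (intro convex_le_linear linear_coord)

section \<open>Order polytopes and their 0/1 points\<close>

definition order_polytope :: "nat \<Rightarrow> (nat \<times> nat) set \<Rightarrow> pt set" where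
  "order_polytope N R = {u \<in> rsp N. (\<forall>i<N. 0 \<le> coord u i \<and> coord u i \<le> 1) \<and>
                                      (\<forall>(a, b)\<in>R. coord u a \<le> coord u b)}"

definition zero_one :: "pt \<Rightarrow> bool" where
  "zero_one p \<longleftrightarrow> (\<forall>i. coord p i = 0 \<or> coord p i = 1)"

definition comonotone :: "pt \<Rightarrow> pt \<Rightarrow> bool" where
  "comonotone u p \<longleftrightarrow> (\<forall>a b. coord u a \<le> coord u b \<longrightarrow> coord p a \<le> coord p b)"

lemma comonotone_trans: "comonotone u v \<Longrightarrow> comonotone v p \<Longrightarrow> comonotone u p"
  unfolding comonotone_def by blast

lemma convex_order_polytope: "convex (order_polytope N R)"
  unfolding convex_def
proof (intro ballI allI impI)
  fix x y and a b :: real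
  assume x: "x \<in> order_polytope N R" and y: "y \<in> order_polytope N R"
    and ab: "0 \<le> a" "0 \<le> b" "a + b = 1"
  have mono: "a * s + b * t \<le> a * s' + b * t'" if "s \<le> s'" "t \<le> t'" for s s' t t' :: real
    using that ab by (intro add_mono mult_left_mono) simp_all
  show "a *\<^sub>R x + b *\<^sub>R y \<in> order_polytope N R"
    unfolding order_polytope_def
  proof (intro CollectI conjI allI impI ballI)
    show "a *\<^sub>R x + b *\<^sub>R y \<in> rsp N"
      using x y by (simp add: order_polytope_def rsp_def)
  next
    fix i assume "i < N"
    then have "0 \<le> coord x i" "coord x i \<le> 1" "0 \<le> coord y i" "coord y i \<le> 1"
      using x y by (auto simp: order_polytope_def)
    then show "0 \<le> coord (a *\<^sub>R x + b *\<^sub>R y) i" "coord (a *\<^sub>R x + b *\<^sub>R y) i \<le> 1"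
      using mono[of 0 "coord x i" 0 "coord y i"] mono[of "coord x i" 1 "coord y i" 1] ab(3)
      by simp_all
  next
    fix e assume e: "e \<in> R"
    obtain i j where ij: "e = (i, j)"
      by (cases e)
    have "coord x i \<le> coord x j" "coord y i \<le> coord y j"
      using x y e ij by (auto simp: order_polytope_def)
    then show "case e of (i, j) \<Rightarrow> coord (a *\<^sub>R x + b *\<^sub>R y) i \<le> coord (a *\<^sub>R x + b *\<^sub>R y) j"
      using ij mono by simp
  qed
qed

lemma comonotone_hull:
  assumes "x \<in> convex hull S" "\<And>p. p \<in> S \<Longrightarrow> comonotone u p" "coord u a \<le> coord u b"
  shows "coord x a \<le> coord x b"
proof -
  have "S \<subseteq> {p. coord p a \<le> coord p b}"
    using assms(2,3) by (auto simp: comonotone_def)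
  then have "convex hull S \<subseteq> {p. coord p a \<le> coord p b}"
    by (rule hull_minimal) (rule convex_coord_le)
  then show ?thesis
    using assms(1) by blast
qed

lemma order_polytope_coord_bounds:
  assumes "u \<in> order_polytope N R"
  shows "0 \<le> coord u i \<and> coord u i \<le> 1"
  using assms coord_eq_0_if_rsp[of u N i] by (cases "i < N") (auto simp: order_polytope_def)

lemma support_indicator_in_order_polytope:
  assumes u: "u \<in> order_polytope N R"
  defines "p \<equiv> pt_of (\<lambda>i. of_bool (coord u i \<noteq> 0)) N"
  shows "p \<in> order_polytope N R" "zero_one p" "comonotone u p"
    and "\<And>i. coord p i = of_bool (coord u i \<noteq> 0)"
proof -
  have supp: "i < N" if "coord u i \<noteq> 0" for i
  proof (rule ccontr)
    assume "\<not> i < N"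
    then show False
      using u that by (simp add: order_polytope_def rsp_def)
  qed
  have pos: "0 < coord u i" if "coord u i \<noteq> 0" for i
    using conjunct1[OF order_polytope_coord_bounds[OF u, of i]] that by simp
  show coord_p: "coord p i = of_bool (coord u i \<noteq> 0)" for i
    using supp[of i] by (auto simp: p_def)
  have mono: "coord p a \<le> coord p b" if "coord u a \<le> coord u b" for a b
    using that pos[of a] conjunct1[OF order_polytope_coord_bounds[OF u, of a]]
    by (cases "coord u b = 0") (simp_all add: coord_p)
  show "comonotone u p"
    unfolding comonotone_def using mono by blast
  show "zero_one p"
    by (simp add: zero_one_def coord_p)
  have "p \<in> rsp N"
    by (simp add: p_def)
  then show "p \<in> order_polytope N R"
    using u mono by (auto simp: order_polytope_def coord_p)
qed

lemma order_polytope_peel: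
  assumes u: "u \<in> order_polytope N R"
    and s: "coord u i0 = s" "0 < s" "s < 1" "\<And>i. coord u i \<noteq> 0 \<Longrightarrow> s \<le> coord u i"
  defines "p \<equiv> pt_of (\<lambda>i. of_bool (coord u i \<noteq> 0)) N"
  defines "u' \<equiv> (1 / (1 - s)) *\<^sub>R (u - s *\<^sub>R p)"
  shows "u' \<in> order_polytope N R" "comonotone u u'"
    and "{i. coord u' i \<noteq> 0} \<subset> {i. coord u i \<noteq> 0}" "u = s *\<^sub>R p + (1 - s) *\<^sub>R u'"
proof -
  have s1: "0 < 1 - s"
    using s(3) by simp
  have coord_p: "coord p i = of_bool (coord u i \<noteq> 0)" for i
    using support_indicator_in_order_polytope(4)[OF u] by (simp add: p_def)
  have coord_u': "coord u' i = (if coord u i \<noteq> 0 then (coord u i - s) / (1 - s) else 0)" for i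
    using s1 by (simp add: u'_def coord_p divide_simps)
  have bounds: "0 \<le> coord u i" "coord u i \<le> 1" for i
    using order_polytope_coord_bounds[OF u] by auto
  have mono: "coord u' a \<le> coord u' b" if "coord u a \<le> coord u b" for a b
  proof (cases "coord u a = 0")
    case True
    then show ?thesis
      using s1 s(4)[of b] by (simp add: coord_u')
  next
    case False
    then have "coord u b \<noteq> 0"
      using that bounds(1)[of a] by auto
    then show ?thesis
      using False that s1 by (simp add: coord_u' divide_right_mono)
  qed
  show "comonotone u u'"
    unfolding comonotone_def using mono by blast
  have u'_bounds: "0 \<le> coord u' i \<and> coord u' i \<le> 1" for i
    using s1 s(4)[of i] bounds[of i] by (simp add: coord_u' divide_le_eq)
  have "u' \<in> rsp N"
    using u by (simp add: order_polytope_def rsp_def coord_u')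
  then show "u' \<in> order_polytope N R"
    using u mono u'_bounds unfolding order_polytope_def by auto
  have "{i. coord u' i \<noteq> 0} \<subseteq> {i. coord u i \<noteq> 0}" "coord u' i0 = 0" "coord u i0 \<noteq> 0"
    using s(1,2) by (auto simp: coord_u')
  then show "{i. coord u' i \<noteq> 0} \<subset> {i. coord u i \<noteq> 0}"
    by blast
  have "coord u i = s * coord p i + (1 - s) * coord u' i" for i
    using s1 by (auto simp: coord_p coord_u' field_simps)
  then show "u = s *\<^sub>R p + (1 - s) *\<^sub>R u'"
    by (intro poly_mapping_eqI) simp
qed

lemma order_polytope_least_nonzero_coord:
  assumes "u \<in> order_polytope N R" "u \<noteq> 0"
  obtains i0 where "0 < coord u i0" "coord u i0 \<le> 1" "\<And>i. coord u i \<noteq> 0 \<Longrightarrow> coord u i0 \<le> coord u i"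
proof -
  define S where "S = {i. coord u i \<noteq> 0}"
  have S: "finite S" "S \<noteq> {}"
    using assms(2) poly_mapping_eqI[of u 0] by (auto simp: S_def)
  have "Min (coord u ` S) \<in> coord u ` S"
    using S by (intro Min_in) auto
  then obtain i0 where i0: "i0 \<in> S" "coord u i0 = Min (coord u ` S)"
    by auto
  show ?thesis
  proof (rule that[of i0])
    show "0 < coord u i0" "coord u i0 \<le> 1"
      using i0(1) order_polytope_coord_bounds[OF assms(1), of i0] by (auto simp: S_def)
    show "coord u i0 \<le> coord u i" if "coord u i \<noteq> 0" for i
      using S(1) that by (simp add: i0(2) S_def)
  qed
qed

lemma order_polytope_hull_comonotone:
  assumes "u \<in> order_polytope N R"
  shows "u \<in> convex hull {p \<in> order_polytope N R. zero_one p \<and> comonotone u p}"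
  using assms
proof (induction "card {i. coord u i \<noteq> 0}" arbitrary: u rule: less_induct)
  case less
  let ?S = "\<lambda>u. {p \<in> order_polytope N R. zero_one p \<and> comonotone u p}"
  define p where "p = pt_of (\<lambda>i. of_bool (coord u i \<noteq> 0)) N"
  note p = support_indicator_in_order_polytope[OF less.prems, folded p_def]
  show ?case
  proof (cases "u = 0")
    case True
    then have "u \<in> ?S u"
      using less.prems by (simp add: zero_one_def comonotone_def)
    then show ?thesis by (rule hull_inc)
  next
    case False
    then obtain i0 where i0: "0 < coord u i0" "coord u i0 \<le> 1"
      "\<And>i. coord u i \<noteq> 0 \<Longrightarrow> coord u i0 \<le> coord u i"
      using order_polytope_least_nonzero_coord[OF less.prems] by blast
    define s where "s = coord u i0"
    have s: "0 < s" "s \<le> 1" "\<And>i. coord u i \<noteq> 0 \<Longrightarrow> s \<le> coord u i"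
      using i0 by (simp_all add: s_def)
    show ?thesis
    proof (cases "s = 1")
      case True
      have "coord u i = coord p i" for i
        using s(3)[of i] order_polytope_coord_bounds[OF less.prems, of i] True p(4)[of i] by auto
      then have "u = p"
        by (rule poly_mapping_eqI)
      then show ?thesis
        using p hull_inc by (metis (no_types, lifting) mem_Collect_eq)
    next
      case False
      then have s_less: "s < 1"
        using s(2) by simp
      define u' where "u' = (1 / (1 - s)) *\<^sub>R (u - s *\<^sub>R p)"
      note peel = order_polytope_peel[OF less.prems s_def[symmetric] s(1) s_less s(3),
          folded p_def, folded u'_def]
      have "card {i. coord u' i \<noteq> 0} < card {i. coord u i \<noteq> 0}"
        using psubset_card_mono[OF _ peel(3)] by simp
      then have "u' \<in> convex hull ?S u'"
        using peel(1) by (rule less.hyps)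
      also have "convex hull ?S u' \<subseteq> convex hull ?S u"
        using comonotone_trans[OF peel(2)] by (intro hull_mono) auto
      finally have "s *\<^sub>R p + (1 - s) *\<^sub>R u' \<in> convex hull ?S u"
        using p s(1,2) by (intro convexD[OF convex_convex_hull hull_inc]) auto
      then show ?thesis
        using peel(4) by metis
    qed
  qed
qed

section \<open>Affine lattices and unimodular equivalence\<close>

lemma in_alat: "v \<in> P \<Longrightarrow> intpt v \<Longrightarrow> v \<in> alat P"
  unfolding alat_def by (intro CollectI exI[of _ "{v}"] exI[of _ "\<lambda>_. 1"]) auto

lemma alat_add_diff:
  assumes "x \<in> alat P" "y \<in> alat P" "z \<in> alat P"
  shows "x + y - z \<in> alat P"
proof -
  obtain S1 c1 where 1: "finite S1" "S1 \<subseteq> {v \<in> P. intpt v}" "\<forall>v\<in>S1. c1 v \<in> \<int>"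
      "sum c1 S1 = 1" "x = (\<Sum>v\<in>S1. c1 v *\<^sub>R v)"
    using assms(1) unfolding alat_def by blast
  obtain S2 c2 where 2: "finite S2" "S2 \<subseteq> {v \<in> P. intpt v}" "\<forall>v\<in>S2. c2 v \<in> \<int>"
      "sum c2 S2 = 1" "y = (\<Sum>v\<in>S2. c2 v *\<^sub>R v)"
    using assms(2) unfolding alat_def by blast
  obtain S3 c3 where 3: "finite S3" "S3 \<subseteq> {v \<in> P. intpt v}" "\<forall>v\<in>S3. c3 v \<in> \<int>"
      "sum c3 S3 = 1" "z = (\<Sum>v\<in>S3. c3 v *\<^sub>R v)"
    using assms(3) unfolding alat_def by blast
  define S where "S = S1 \<union> S2 \<union> S3"
  define ext where "ext T c v = (if v \<in> T then c v else 0)" for T and c :: "pt \<Rightarrow> real" and v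
  define c where "c v = ext S1 c1 v + ext S2 c2 v - ext S3 c3 v" for v
  have S: "finite S" "S1 \<subseteq> S" "S2 \<subseteq> S" "S3 \<subseteq> S"
    using 1 2 3 by (auto simp: S_def)
  have ext_sum: "sum (ext T c') S = sum c' T" "(\<Sum>v\<in>S. ext T c' v *\<^sub>R v) = (\<Sum>v\<in>T. c' v *\<^sub>R v)"
    if "T \<subseteq> S" for T c'
    using that S(1) by (auto simp: ext_def intro: sum.mono_neutral_cong_right)
  have "sum c S = 1"
    using 1 2 3 S by (simp add: c_def sum.distrib sum_subtractf ext_sum)
  moreover have "x + y - z = (\<Sum>v\<in>S. c v *\<^sub>R v)"
    using 1 2 3 S by (simp add: c_def scaleR_diff_left scaleR_add_left sum.distrib sum_subtractf ext_sum)
  moreover have "\<forall>v\<in>S. c v \<in> \<int>" "S \<subseteq> {v \<in> P. intpt v}"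
    using 1 2 3 by (auto simp: c_def ext_def S_def)
  ultimately show ?thesis
    unfolding alat_def using S(1) by blast
qed

context
  fixes P :: "pt set"
  assumes zero: "0 \<in> alat P"
begin

lemma alat_add: "x \<in> alat P \<Longrightarrow> y \<in> alat P \<Longrightarrow> x + y \<in> alat P"
  using alat_add_diff[OF _ _ zero, of x y] by simp

lemma alat_uminus: "x \<in> alat P \<Longrightarrow> - x \<in> alat P"
  using alat_add_diff[OF zero zero, of x] by simp

lemma alat_diff: "x \<in> alat P \<Longrightarrow> y \<in> alat P \<Longrightarrow> x - y \<in> alat P"
  using alat_add_diff[OF _ zero, of x y] by simp

lemma alat_scaleR_int:
  assumes "x \<in> alat P" "c \<in> \<int>"
  shows "c *\<^sub>R x \<in> alat P"
proof -
  have nat: "real k *\<^sub>R x \<in> alat P" for k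
    by (induction k) (simp_all add: zero alat_add assms(1) scaleR_add_left)
  obtain k where "c = of_int k"
    using assms(2) Ints_cases by blast
  then have "c = real (nat k) \<or> c = - real (nat (- k))"
    by auto
  then show ?thesis
    using nat alat_uminus by (metis scaleR_minus_left)
qed

lemma alat_sum: "finite I \<Longrightarrow> (\<And>i. i \<in> I \<Longrightarrow> f i \<in> alat P) \<Longrightarrow> sum f I \<in> alat P"
  by (induction I rule: finite_induct) (simp_all add: zero alat_add)

lemma lat_subset_alat:
  assumes "\<And>i. i < N \<Longrightarrow> Poly_Mapping.single i 1 \<in> alat P"
  shows "lat N \<subseteq> alat P"
proof
  fix x assume "x \<in> lat N"
  then have x: "x \<in> rsp N" "intpt x"
    by (auto simp: lat_def)
  have if_1: "a * (if b then 1 else 0) = (if b then a else 0)" for a :: real and b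
    by simp
  have "x = (\<Sum>i<N. coord x i *\<^sub>R Poly_Mapping.single i 1)"
    using coord_eq_0_if_rsp[OF x(1)]
    by (intro poly_mapping_eqI) (simp add: lookup_single when_def if_1 sum.delta' not_le)
  also have "\<dots> \<in> alat P"
    using x(2) assms by (intro alat_sum alat_scaleR_int) (auto simp: intpt_def)
  finally show "x \<in> alat P" .
qed

end


lemma alat_subset_lat:
  assumes "P \<subseteq> rsp N"
  shows "alat P \<subseteq> lat N"
proof
  fix x assume "x \<in> alat P"
  then obtain S c where S: "finite S" "S \<subseteq> {v \<in> P. intpt v}" "\<forall>v\<in>S. c v \<in> \<int>"
      "x = (\<Sum>v\<in>S. c v *\<^sub>R v)"
    unfolding alat_def by blast
  have "x \<in> rsp N"
    using S assms unfolding rsp_def by (auto intro!: sum.neutral)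
  moreover have "intpt x"
    using S unfolding intpt_def by (auto intro!: Ints_sum Ints_mult)
  ultimately show "x \<in> lat N"
    by (simp add: lat_def)
qed

definition affine_map :: "(pt \<Rightarrow> pt) \<Rightarrow> bool" where
  "affine_map A \<longleftrightarrow> linear (\<lambda>x. A x - A 0)"

lemma affine_map_if_linear: "linear f \<Longrightarrow> affine_map f"
  by (simp add: affine_map_def linear_0)

lemma affine_map_sum:
  assumes "affine_map A" "sum c S = 1"
  shows "A (\<Sum>v\<in>S. c v *\<^sub>R h v) = (\<Sum>v\<in>S. c v *\<^sub>R A (h v))"
proof -
  interpret linear "\<lambda>x. A x - A 0"
    using assms(1) by (simp add: affine_map_def)
  have "A (\<Sum>v\<in>S. c v *\<^sub>R h v) - A 0 = (\<Sum>v\<in>S. c v *\<^sub>R (A (h v) - A 0))"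
    using sum[of "\<lambda>v. c v *\<^sub>R h v" S] scale by simp
  also have "\<dots> = (\<Sum>v\<in>S. c v *\<^sub>R A (h v)) - A 0"
    using assms(2) by (simp add: scaleR_diff_right sum_subtractf flip: scaleR_sum_left)
  finally show ?thesis
    by simp
qed

lemma affine_map_convex_comb:
  assumes "affine_map A" "a + b = 1"
  shows "A (a *\<^sub>R x + b *\<^sub>R y) = a *\<^sub>R A x + b *\<^sub>R A y"
proof -
  interpret linear "\<lambda>x. A x - A 0"
    using assms(1) by (simp add: affine_map_def)
  have "A (a *\<^sub>R x + b *\<^sub>R y) - A 0 = a *\<^sub>R (A x - A 0) + b *\<^sub>R (A y - A 0)"
    using add[of "a *\<^sub>R x" "b *\<^sub>R y"] scale[of a x] scale[of b y] by simp
  then show ?thesis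
    using assms(2) by (simp add: algebra_simps flip: scaleR_add_left)
qed

lemma affine_inverse_on_hull:
  assumes "affine_map A" "affine_map B" "convex Q" "A ` V \<subseteq> Q" "\<And>v. v \<in> V \<Longrightarrow> B (A v) = v"
  shows "convex hull V \<subseteq> {x. A x \<in> Q \<and> B (A x) = x}"
proof (rule hull_minimal)
  show "V \<subseteq> {x. A x \<in> Q \<and> B (A x) = x}"
    using assms(4,5) by auto
  show "convex {x. A x \<in> Q \<and> B (A x) = x}"
    unfolding convex_def
    using affine_map_convex_comb[OF assms(1)] affine_map_convex_comb[OF assms(2)]
      convexD[OF assms(3)] by auto
qed

lemma affine_map_alat:
  assumes "affine_map A" "\<And>x. intpt x \<Longrightarrow> intpt (A x)"
    and "\<And>x. x \<in> P \<Longrightarrow> A x \<in> Q" "\<And>x. x \<in> P \<Longrightarrow> B (A x) = x"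
    and "x \<in> alat P"
  shows "A x \<in> alat Q"
proof -
  obtain S c where S: "finite S" "S \<subseteq> {v \<in> P. intpt v}" "\<forall>v\<in>S. c v \<in> \<int>"
      "sum c S = 1" "x = (\<Sum>v\<in>S. c v *\<^sub>R v)"
    using assms(5) unfolding alat_def by blast
  have inj: "inj_on A S"
    using assms(4) S(2) by (metis (mono_tags, lifting) inj_on_inverseI mem_Collect_eq subsetD)
  have "A x = (\<Sum>v\<in>S. c v *\<^sub>R A v)"
    using affine_map_sum[OF assms(1) S(4), of id] S(5) by simp
  also have "\<dots> = (\<Sum>y\<in>A ` S. c (B y) *\<^sub>R y)"
    using S(2) assms(4) by (simp add: sum.reindex[OF inj] subset_iff)
  finally have "A x = (\<Sum>y\<in>A ` S. c (B y) *\<^sub>R y)" .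
  moreover have "(\<Sum>y\<in>A ` S. c (B y)) = 1"
    using S(2,4) assms(4) by (simp add: sum.reindex[OF inj] subset_iff)
  ultimately show ?thesis
    unfolding alat_def using S assms(2-4)
    by (intro CollectI exI[of _ "A ` S"] exI[of _ "\<lambda>y. c (B y)"]) auto
qed

lemma affine_inverse_on_alat:
  assumes "affine_map A" "affine_map B" "\<And>x. x \<in> P \<Longrightarrow> B (A x) = x" "x \<in> alat P"
  shows "B (A x) = x"
proof -
  obtain S c where S: "finite S" "S \<subseteq> {v \<in> P. intpt v}" "sum c S = 1" "x = (\<Sum>v\<in>S. c v *\<^sub>R v)"
    using assms(4) unfolding alat_def by blast
  have "B (A x) = (\<Sum>v\<in>S. c v *\<^sub>R B (A v))"
    using affine_map_sum[OF assms(1) S(3), of id] affine_map_sum[OF assms(2) S(3), of A] S(4)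
    by simp
  also have "\<dots> = x"
    unfolding S(4) using S(2) assms(3) by (intro sum.cong) auto
  finally show ?thesis .
qed

lemma unimod_equiv_by_affine_inverses:
  assumes A: "affine_map A" "\<And>x. intpt x \<Longrightarrow> intpt (A x)"
    and B: "affine_map B" "\<And>y. intpt y \<Longrightarrow> intpt (B y)"
    and "A ` V \<subseteq> convex hull W" "B ` W \<subseteq> convex hull V"
    and "\<And>v. v \<in> V \<Longrightarrow> B (A v) = v" "\<And>w. w \<in> W \<Longrightarrow> A (B w) = w"
  shows "unimod_equiv (convex hull V) (convex hull W)"
proof -
  have "convex hull V \<subseteq> {x. A x \<in> convex hull W \<and> B (A x) = x}"
    using assms by (intro affine_inverse_on_hull) simp_all
  then have AP: "\<And>x. x \<in> convex hull V \<Longrightarrow> A x \<in> convex hull W"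
    and BA: "\<And>x. x \<in> convex hull V \<Longrightarrow> B (A x) = x"
    by blast+
  have "convex hull W \<subseteq> {y. B y \<in> convex hull V \<and> A (B y) = y}"
    using assms by (intro affine_inverse_on_hull) simp_all
  then have BQ: "\<And>y. y \<in> convex hull W \<Longrightarrow> B y \<in> convex hull V"
    and AB: "\<And>y. y \<in> convex hull W \<Longrightarrow> A (B y) = y"
    by blast+
  have "A ` (convex hull V) = convex hull W"
    using AP BQ AB by (metis image_eqI image_subsetI subset_antisym subsetI)
  moreover have "bij_betw A (alat (convex hull V)) (alat (convex hull W))"
  proof (rule bij_betw_byWitness[where f' = B])
    show "\<forall>x\<in>alat (convex hull V). B (A x) = x"
      using affine_inverse_on_alat[OF A(1) B(1) BA] by blast
    show "\<forall>y\<in>alat (convex hull W). A (B y) = y"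
      using affine_inverse_on_alat[OF B(1) A(1) AB] by blast
    show "A ` alat (convex hull V) \<subseteq> alat (convex hull W)"
      using affine_map_alat[OF A AP BA] by blast
    show "B ` alat (convex hull W) \<subseteq> alat (convex hull V)"
      using affine_map_alat[OF B BQ AB] by blast
  qed
  ultimately show ?thesis
    unfolding unimod_equiv_def using A(1)
    by (intro exI[of _ "\<lambda>x. A x - A 0"] exI[of _ "A 0"]) (simp add: affine_map_def)
qed

lemma unimod_equiv_refl: "unimod_equiv P P"
  unfolding unimod_equiv_def by (intro exI[of _ id] exI[of _ 0]) (simp add: linear_id bij_betw_def)

section \<open>Combinatorial mutations along a segment\<close>

lemma Inf_scaled_unit_interval: "Inf ((\<lambda>t. t * a) ` {0..1}) = min 0 (a :: real)"
proof (rule cInf_eq_minimum)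
  show "min 0 a \<in> (\<lambda>t. t * a) ` {0..1}"
    by (cases "0 \<le> a") (auto intro: rev_image_eqI[of 0] rev_image_eqI[of 1])
next
  fix x assume "x \<in> (\<lambda>t. t * a) ` {0..1}"
  then obtain t where t: "0 \<le> t" "t \<le> 1" "x = t * a"
    by auto
  show "min 0 a \<le> x"
  proof (cases "0 \<le> a")
    case False
    have "(1 - t) * a \<le> 0"
      using t False by (simp add: mult_nonneg_nonpos)
    then show ?thesis
      using t False by (simp add: algebra_simps)
  qed (use t in simp)
qed

lemma pair_scaleR: "pair d (t *\<^sub>R f) u = t * pair d f u"
  by (simp add: pair_def sum_distrib_left mult.assoc)

lemma trop_map_segment: "trop_map d w (convex hull {0, f}) u = u - min 0 (pair d f u) *\<^sub>R w"
proof -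
  have "convex hull {0, f} = (\<lambda>t. t *\<^sub>R f) ` {0..1}"
    by (auto simp: segment_convex_hull[symmetric] closed_segment_def image_iff)
  then have "(\<lambda>g. pair d g u) ` (convex hull {0, f}) = (\<lambda>t. t * pair d f u) ` {0..1}"
    by (simp add: image_image pair_scaleR)
  then show ?thesis
    by (simp add: trop_map_def Inf_scaled_unit_interval)
qed

lemma pair_segment_eq_0: "pair d f w = 0 \<Longrightarrow> g \<in> convex hull {0, f} \<Longrightarrow> pair d g w = 0"
  by (auto simp: segment_convex_hull[symmetric] closed_segment_def pair_scaleR)

lemma lattice_polytope_segment: "f \<in> lat d \<Longrightarrow> lattice_polytope_in d (convex hull {0, f})"
  unfolding lattice_polytope_in_def by (intro exI[of _ "{0, f}"]) (auto simp: lat_def rsp_def intpt_def)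

lemma primitive_if_unit_coord:
  assumes "w \<in> lat d" "\<bar>coord w i\<bar> = 1"
  shows "primitive d w"
  unfolding primitive_def
proof (intro conjI ballI allI impI)
  show "w \<in> lat d" by fact
  show "w \<noteq> 0"
    using assms(2) by auto
  fix v k assume "v \<in> lat d" "w = real k *\<^sub>R v"
  moreover obtain z where "coord v i = of_int z"
    using \<open>v \<in> lat d\<close> Ints_cases by (auto simp: lat_def intpt_def)
  ultimately have "of_int \<bar>int k * z\<bar> = (1 :: real)"
    using assms(2) by (simp add: abs_mult)
  then have "int k * \<bar>z\<bar> = 1"
    by (simp only: of_int_eq_1_iff abs_mult)
  then have "int k dvd 1"
    by (metis dvd_triv_left)
  then show "k = 1"
    by simp
qed

lemma mutation_sequence_equiv_refl: "lattice_polytope P \<Longrightarrow> mutation_sequence_equiv P P"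
  unfolding mutation_sequence_equiv_def by (intro exI[of _ "[P]"]) simp

lemma mutation_sequence_equiv_snoc:
  assumes "mutation_sequence_equiv P Q" "related Q R" "lattice_polytope R"
  shows "mutation_sequence_equiv P R"
proof -
  obtain Ps where Ps: "Ps \<noteq> []" "hd Ps = P" "last Ps = Q" "\<forall>Q\<in>set Ps. lattice_polytope Q"
      "\<And>i. Suc i < length Ps \<Longrightarrow> related (Ps ! i) (Ps ! Suc i)"
    using assms(1) unfolding mutation_sequence_equiv_def by blast
  have "related ((Ps @ [R]) ! i) ((Ps @ [R]) ! Suc i)" if "Suc i < length (Ps @ [R])" for i
  proof (cases "Suc i < length Ps")
    case True
    then show ?thesis
      using Ps(5) by (simp add: nth_append)
  next
    case False
    then have "i = length Ps - 1"
      using that by simp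
    then show ?thesis
      using Ps(1,3) assms(2) by (simp add: nth_append last_conv_nth)
  qed
  then show ?thesis
    unfolding mutation_sequence_equiv_def using Ps(1-4) assms(3)
    by (intro exI[of _ "Ps @ [R]"]) auto
qed

section \<open>The intermediate polytopes\<close>

context
  fixes m :: nat
begin

text \<open>Rows \<open>x, y, z\<close> of a point of \<open>\<real>\<^bsup>3m\<^esup>\<close> are its coordinates \<open>i\<close>, \<open>m + i\<close>, \<open>2m + i\<close> (\<open>i < m\<close>).
  \<open>next_y k\<close> is the coordinate of \<open>y\<^sub>k\<^sub>+\<^sub>1\<close>; for \<open>k + 1 = m\<close> it is \<open>3m\<close>, where points of
  \<open>\<real>\<^bsup>3m\<^esup>\<close> vanish, which encodes \<open>y\<^sub>m = 0\<close>.\<close>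

definition next_y :: "nat \<Rightarrow> nat" where
  "next_y k = (if Suc k < m then m + Suc k else 3 * m)"

lemma coord_next_y:
  "u \<in> rsp (3 * m) \<Longrightarrow> coord u (next_y k) = (if Suc k < m then coord u (m + Suc k) else 0)"
  by (simp add: next_y_def coord_eq_0_if_rsp)

definition chain_rel :: "nat \<Rightarrow> (nat \<times> nat) set" where
  "chain_rel j = {(i', i) | i i'. i \<le> i' \<and> i' < m} \<union> {(m + i', m + i) | i i'. i \<le> i' \<and> i' < m}
     \<union> {(2 * m + i', 2 * m + i) | i i'. i \<le> i' \<and> i' < m} \<union> {(m + i, 2 * m + i) | i. i < m}
     \<union> {(k, m + k) | k. j \<le> k \<and> k < m}"

definition mutated_ineqs :: "nat \<Rightarrow> pt \<Rightarrow> bool" where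
  "mutated_ineqs j u \<longleftrightarrow>
     (\<forall>k<j. \<forall>i\<le>k. coord u k + coord u (m + i) \<le> coord u (2 * m + i) + coord u (next_y k))"

text \<open>\<open>stage_polytope j\<close> is \<open>H\<^sub>j\<close>: the inequalities \<open>x\<^sub>k \<le> y\<^sub>k\<close> with \<open>k < j\<close> have been replaced
  by \<open>mutated_ineqs\<close>.\<close>

definition stage_polytope :: "nat \<Rightarrow> pt set" where
  "stage_polytope j = order_polytope (3 * m) (chain_rel j) \<inter> {u. mutated_ineqs j u}"

lemma mem_stage_polytope:
  "u \<in> stage_polytope j \<longleftrightarrow> u \<in> rsp (3 * m) \<and> (\<forall>i<3 * m. 0 \<le> coord u i \<and> coord u i \<le> 1) \<and>
     (\<forall>i i'. i \<le> i' \<longrightarrow> i' < m \<longrightarrow> coord u i' \<le> coord u i \<and> coord u (m + i') \<le> coord u (m + i) \<and>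
                                     coord u (2 * m + i') \<le> coord u (2 * m + i)) \<and>
     (\<forall>i<m. coord u (m + i) \<le> coord u (2 * m + i)) \<and>
     (\<forall>k. j \<le> k \<longrightarrow> k < m \<longrightarrow> coord u k \<le> coord u (m + k)) \<and> mutated_ineqs j u"
  unfolding stage_polytope_def order_polytope_def chain_rel_def by auto

lemma stage_polytopeD:
  assumes "u \<in> stage_polytope j"
  shows stage_rsp: "u \<in> rsp (3 * m)"
    and stage_bounds: "i < 3 * m \<Longrightarrow> 0 \<le> coord u i \<and> coord u i \<le> 1"
    and stage_decreasing: "i \<le> i' \<Longrightarrow> i' < m \<Longrightarrow> coord u i' \<le> coord u i \<and>
           coord u (m + i') \<le> coord u (m + i) \<and> coord u (2 * m + i') \<le> coord u (2 * m + i)"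
    and stage_y_le_z: "i < m \<Longrightarrow> coord u (m + i) \<le> coord u (2 * m + i)"
    and stage_x_le_y: "j \<le> k \<Longrightarrow> k < m \<Longrightarrow> coord u k \<le> coord u (m + k)"
    and stage_mutated: "k < j \<Longrightarrow> i \<le> k \<Longrightarrow>
           coord u k + coord u (m + i) \<le> coord u (2 * m + i) + coord u (next_y k)"
  using assms by (auto simp: mem_stage_polytope mutated_ineqs_def)

lemma next_y_bounds:
  assumes "u \<in> stage_polytope j"
  shows next_y_nonneg: "0 \<le> coord u (next_y k)"
    and next_y_le: "i \<le> k \<Longrightarrow> k < m \<Longrightarrow> coord u (next_y k) \<le> coord u (m + i)"
    and le_next_y: "k < i \<Longrightarrow> i < m \<Longrightarrow> coord u (m + i) \<le> coord u (next_y k)"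
  using stage_bounds[OF assms, of "m + Suc k"] stage_bounds[OF assms, of "m + i"]
    stage_decreasing[OF assms, of i "Suc k"] stage_decreasing[OF assms, of "Suc k" i]
  by (auto simp: coord_next_y[OF stage_rsp[OF assms]])

lemma stage_polytope_0: "stage_polytope 0 = order_polytope (3 * m) (chain_rel 0)"
  by (auto simp: stage_polytope_def mutated_ineqs_def)

lemma convex_stage_polytope: "convex (stage_polytope j)"
proof -
  have lin: "linear (\<lambda>u. coord u a + coord u b)" for a b
    by (intro linear_compose_add linear_coord)
  have "{u. mutated_ineqs j u} =
      (\<Inter>k<j. \<Inter>i\<le>k. {u. coord u k + coord u (m + i) \<le> coord u (2 * m + i) + coord u (next_y k)})"
    by (auto simp: mutated_ineqs_def)
  then have "convex {u. mutated_ineqs j u}"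
    by (simp add: convex_INT convex_le_linear lin)
  then show ?thesis
    unfolding stage_polytope_def by (intro convex_Int convex_order_polytope)
qed

definition y_prefix :: "nat \<Rightarrow> pt" where
  "y_prefix k = pt_of (\<lambda>i. of_bool (m \<le> i \<and> i \<le> m + k)) (3 * m)"

definition gap :: "nat \<Rightarrow> pt \<Rightarrow> real" where
  "gap k u = coord u (next_y k) - coord u k"

definition mut :: "nat \<Rightarrow> pt \<Rightarrow> pt" where
  "mut k u = u + min 0 (gap k u) *\<^sub>R y_prefix k"

definition mut_inv :: "nat \<Rightarrow> pt \<Rightarrow> pt" where
  "mut_inv k u = u - min 0 (gap k u) *\<^sub>R y_prefix k"

lemma coord_y_prefix: "k < m \<Longrightarrow> coord (y_prefix k) i = of_bool (m \<le> i \<and> i \<le> m + k)"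
  by (simp add: y_prefix_def)

lemma gap_add_y_prefix: "k < m \<Longrightarrow> gap k (u + c *\<^sub>R y_prefix k) = gap k u"
  by (simp add: gap_def coord_y_prefix next_y_def)

lemma gap_mut_inv: "k < m \<Longrightarrow> gap k (mut_inv k u) = gap k u"
  using gap_add_y_prefix[of k u "- min 0 (gap k u)"] by (simp add: mut_inv_def)

lemma mut_mut_inv: "k < m \<Longrightarrow> mut k (mut_inv k u) = u"
  by (simp add: mut_def gap_mut_inv) (simp add: mut_inv_def)

lemma coord_mut:
  "k < m \<Longrightarrow> coord (mut k u) i = coord u i + (if m \<le> i \<and> i \<le> m + k then min 0 (gap k u) else 0)"
  by (simp add: mut_def coord_y_prefix)

lemma coord_mut_inv:
  "k < m \<Longrightarrow> coord (mut_inv k u) i = coord u i - (if m \<le> i \<and> i \<le> m + k then min 0 (gap k u) else 0)"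
  by (simp add: mut_inv_def coord_y_prefix)

lemma next_y_le_mut_y:
  assumes k: "k < m" and u: "u \<in> stage_polytope k" and i: "m \<le> i" "i \<le> m + k"
  shows "coord u (next_y k) \<le> coord u i + min 0 (gap k u)"
proof -
  have "coord u k \<le> coord u (m + k)" "coord u (m + k) \<le> coord u i"
    using stage_x_le_y[OF u, of k] stage_decreasing[OF u, of "i - m" k] i k by simp_all
  moreover have "coord u (next_y k) \<le> coord u i"
    using next_y_le[OF u, of "i - m" k] i k by simp
  ultimately show ?thesis
    by (simp add: gap_def)
qed

lemma mutated_ineqs_mut:
  assumes k: "k < m" and u: "u \<in> stage_polytope k"
  shows "mutated_ineqs (Suc k) (mut k u)"
  unfolding mutated_ineqs_def
proof (intro allI impI)
  fix k' i assume k': "k' < Suc k" "i \<le> k'"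
  have v: "coord (mut k u) i = coord u i + (if m \<le> i \<and> i \<le> m + k then min 0 (gap k u) else 0)" for i
    using k by (simp add: coord_mut)
  show "coord (mut k u) k' + coord (mut k u) (m + i) \<le> coord (mut k u) (2 * m + i) + coord (mut k u) (next_y k')"
  proof (cases "k' < k")
    case True
    then show ?thesis
      using stage_mutated[OF u, of k' i] k k' by (auto simp: v next_y_def)
  next
    case False
    then have "k' = k"
      using k' by simp
    then show ?thesis
      using stage_y_le_z[OF u, of i] k k' by (simp add: v next_y_def gap_def min_def)
  qed
qed

lemma mut_in_stage_polytope:
  assumes k: "k < m" and u: "u \<in> stage_polytope k"
  shows "mut k u \<in> stage_polytope (Suc k)"
proof -
  define \<delta> where "\<delta> = min 0 (gap k u)"
  have v: "coord (mut k u) i = coord u i + (if m \<le> i \<and> i \<le> m + k then \<delta> else 0)" for i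
    using k by (simp add: coord_mut \<delta>_def)
  have key: "coord u (next_y k) \<le> coord u i + \<delta>" if "m \<le> i" "i \<le> m + k" for i
    using next_y_le_mut_y[OF k u that] by (simp add: \<delta>_def)
  have \<delta>: "\<delta> \<le> 0" "\<delta> \<le> gap k u"
    by (simp_all add: \<delta>_def)
  show ?thesis
    unfolding mem_stage_polytope
  proof (intro conjI allI impI)
    show "mut k u \<in> rsp (3 * m)"
      using stage_rsp[OF u] k by (auto simp: rsp_def v)
  next
    fix i assume "i < 3 * m"
    then show "0 \<le> coord (mut k u) i" "coord (mut k u) i \<le> 1"
      using stage_bounds[OF u, of i] key[of i] next_y_nonneg[OF u, of k] \<delta> by (auto simp: v)
  next
    fix i i' assume "i \<le> i'" "i' < m"
    then show "coord (mut k u) i' \<le> coord (mut k u) i"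
      "coord (mut k u) (m + i') \<le> coord (mut k u) (m + i)"
      "coord (mut k u) (2 * m + i') \<le> coord (mut k u) (2 * m + i)"
      using stage_decreasing[OF u, of i i'] key[of "m + i"] le_next_y[OF u, of k i'] k by (auto simp: v)
  next
    fix i assume "i < m"
    then show "coord (mut k u) (m + i) \<le> coord (mut k u) (2 * m + i)"
      using stage_y_le_z[OF u, of i] \<delta> by (auto simp: v)
  next
    fix k' assume "Suc k \<le> k'" "k' < m"
    then show "coord (mut k u) k' \<le> coord (mut k u) (m + k')"
      using stage_x_le_y[OF u, of k'] by (simp add: v)
  qed (rule mutated_ineqs_mut[OF k u])
qed

lemma mut_inv_in_stage_polytope:
  assumes k: "k < m" and u: "u \<in> stage_polytope (Suc k)"
  shows "mut_inv k u \<in> stage_polytope k"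
proof -
  define \<delta> where "\<delta> = min 0 (gap k u)"
  have v: "coord (mut_inv k u) i = coord u i - (if m \<le> i \<and> i \<le> m + k then \<delta> else 0)" for i
    using k by (simp add: coord_mut_inv \<delta>_def)
  have y_le_z: "coord u (m + i) - \<delta> \<le> coord u (2 * m + i)" if "i \<le> k" for i
    using stage_mutated[OF u, of k i] stage_y_le_z[OF u, of i] that k by (auto simp: \<delta>_def gap_def)
  have y_le_1: "coord u i - \<delta> \<le> 1" if i: "m \<le> i" "i \<le> m + k" for i
  proof -
    obtain i0 where i0: "i = m + i0"
      using le_Suc_ex[OF i(1)] by blast
    then have "coord u (m + i0) - \<delta> \<le> 1"
      using y_le_z[of i0] stage_bounds[OF u, of "2 * m + i0"] i(2) k by simp
    then show ?thesis
      unfolding i0 .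
  qed
  have \<delta>: "\<delta> \<le> 0" "\<delta> = 0 \<and> coord u k \<le> coord u (next_y k) \<or> \<delta> = gap k u"
    by (auto simp: \<delta>_def gap_def)
  show ?thesis
    unfolding mem_stage_polytope mutated_ineqs_def
  proof (intro conjI allI impI)
    show "mut_inv k u \<in> rsp (3 * m)"
      using stage_rsp[OF u] k by (auto simp: rsp_def v)
  next
    fix i assume "i < 3 * m"
    then show "0 \<le> coord (mut_inv k u) i" "coord (mut_inv k u) i \<le> 1"
      using stage_bounds[OF u, of i] y_le_1[of i] \<delta>(1) by (auto simp: v)
  next
    fix i i' assume "i \<le> i'" "i' < m"
    then show "coord (mut_inv k u) i' \<le> coord (mut_inv k u) i"
      "coord (mut_inv k u) (m + i') \<le> coord (mut_inv k u) (m + i)"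
      "coord (mut_inv k u) (2 * m + i') \<le> coord (mut_inv k u) (2 * m + i)"
      using stage_decreasing[OF u, of i i'] \<delta>(1) by (auto simp: v)
  next
    fix i assume "i < m"
    then show "coord (mut_inv k u) (m + i) \<le> coord (mut_inv k u) (2 * m + i)"
      using stage_y_le_z[OF u, of i] y_le_z[of i] by (auto simp: v)
  next
    fix k' assume "k \<le> k'" "k' < m"
    then show "coord (mut_inv k u) k' \<le> coord (mut_inv k u) (m + k')"
      using stage_x_le_y[OF u, of k'] next_y_le[OF u, of k k] \<delta>(2) by (cases "k' = k") (auto simp: v gap_def)
  next
    fix k' i assume "k' < k" "i \<le> k'"
    then show "coord (mut_inv k u) k' + coord (mut_inv k u) (m + i)
               \<le> coord (mut_inv k u) (2 * m + i) + coord (mut_inv k u) (next_y k')"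
      using stage_mutated[OF u, of k' i] k by (auto simp: v next_y_def)
  qed
qed

lemma stage_polytope_Suc:
  assumes "k < m"
  shows "stage_polytope (Suc k) = mut k ` stage_polytope k"
proof
  show "mut k ` stage_polytope k \<subseteq> stage_polytope (Suc k)"
    using mut_in_stage_polytope[OF assms] by blast
  show "stage_polytope (Suc k) \<subseteq> mut k ` stage_polytope k"
  proof
    fix v assume "v \<in> stage_polytope (Suc k)"
    then have "mut_inv k v \<in> stage_polytope k" "v = mut k (mut_inv k v)"
      using mut_inv_in_stage_polytope[OF assms] mut_mut_inv[OF assms] by auto
    then show "v \<in> mut k ` stage_polytope k"
      by blast
  qed
qed

fun mut_iter :: "nat \<Rightarrow> pt \<Rightarrow> pt" where
  "mut_iter 0 u = u"
| "mut_iter (Suc j) u = mut j (mut_iter j u)"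

lemma stage_polytope_eq_image: "j \<le> m \<Longrightarrow> stage_polytope j = mut_iter j ` stage_polytope 0"
proof (induction j)
  case (Suc j)
  then show ?case
    by (simp add: stage_polytope_Suc image_image)
qed simp

lemma coord_mut_iter_outside:
  "j \<le> m \<Longrightarrow> \<not> (m \<le> i \<and> i < m + j) \<Longrightarrow> coord (mut_iter j u) i = coord u i"
  by (induction j) (auto simp: coord_mut)

lemma gap_mut_iter: "k < m \<Longrightarrow> gap k (mut_iter k u) = gap k u"
  by (simp add: gap_def coord_mut_iter_outside next_y_def)

lemma mut_iter_eq_sum: "j \<le> m \<Longrightarrow> mut_iter j u = u + (\<Sum>k<j. min 0 (gap k u) *\<^sub>R y_prefix k)"
proof (induction j)
  case (Suc j)
  have "gap j (mut_iter j u) = gap j u"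
    using Suc.prems by (simp add: gap_mut_iter)
  then show ?case
    using Suc by (simp add: mut_def)
qed simp

definition mut_iter_lin :: "(nat \<Rightarrow> bool) \<Rightarrow> nat \<Rightarrow> pt \<Rightarrow> pt" where
  "mut_iter_lin neg j u = u + (\<Sum>k<j. (of_bool (neg k) * gap k u) *\<^sub>R y_prefix k)"

lemma linear_mut_iter_lin: "linear (mut_iter_lin neg j)"
proof (rule linearI)
  fix x y
  show "mut_iter_lin neg j (x + y) = mut_iter_lin neg j x + mut_iter_lin neg j y"
    by (simp add: mut_iter_lin_def gap_def algebra_simps scaleR_add_left sum.distrib sum_subtractf)
next
  fix c x
  show "mut_iter_lin neg j (c *\<^sub>R x) = c *\<^sub>R mut_iter_lin neg j x"
    by (simp add: mut_iter_lin_def gap_def algebra_simps scaleR_add_right scaleR_sum_right)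
qed

lemma mut_iter_eq_lin:
  assumes "j \<le> m" "\<And>k. k < j \<Longrightarrow> (neg k \<longrightarrow> gap k u \<le> 0) \<and> (\<not> neg k \<longrightarrow> 0 \<le> gap k u)"
  shows "mut_iter j u = mut_iter_lin neg j u"
proof -
  have "min 0 (gap k u) = of_bool (neg k) * gap k u" if "k < j" for k
    using assms(2)[OF that] by (cases "neg k") (auto simp: min_def)
  then show ?thesis
    unfolding mut_iter_eq_sum[OF assms(1)] mut_iter_lin_def by simp
qed

definition staircase :: "nat \<Rightarrow> nat \<Rightarrow> nat \<Rightarrow> pt" where
  "staircase r1 r2 r3 = pt_of (\<lambda>k. if k < m then of_bool (k < r1) else if k < 2 * m then of_bool (k - m < r2)
                                 else of_bool (k - 2 * m < r3)) (3 * m)"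

lemma coord_staircase:
  "i < m \<Longrightarrow> coord (staircase r1 r2 r3) i = of_bool (i < r1)"
  "i < m \<Longrightarrow> coord (staircase r1 r2 r3) (m + i) = of_bool (i < r2)"
  "i < m \<Longrightarrow> coord (staircase r1 r2 r3) (2 * m + i) = of_bool (i < r3)"
  "coord (staircase r1 r2 r3) (next_y k) = of_bool (Suc k < m \<and> Suc k < r2)"
  by (simp_all add: staircase_def next_y_def)

lemma staircase_0_0_0: "staircase 0 0 0 = 0"
  by (intro poly_mapping_eqI) (simp add: staircase_def)

lemma staircase_in_stage_polytope:
  assumes "r1 \<le> r2" "r2 \<le> r3" "r3 \<le> m" "j \<le> m" "\<And>k. k < j \<Longrightarrow> k < r1 \<Longrightarrow> Suc k < r2"
  shows "staircase r1 r2 r3 \<in> stage_polytope j"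
  unfolding mem_stage_polytope mutated_ineqs_def
proof (intro conjI allI impI)
  fix k i assume k: "k < j" "i \<le> k"
  show "coord (staircase r1 r2 r3) k + coord (staircase r1 r2 r3) (m + i)
        \<le> coord (staircase r1 r2 r3) (2 * m + i) + coord (staircase r1 r2 r3) (next_y k)"
  proof (cases "k < r1")
    case True
    then have "Suc k < r2"
      using assms(5) k by blast
    moreover have "Suc k < m"
      using calculation assms by linarith
    ultimately show ?thesis
      using True assms k by (simp add: coord_staircase)
  next
    case False
    then show ?thesis
      using assms k by (simp add: coord_staircase)
  qed
qed (use assms in \<open>auto simp: staircase_def\<close>)

definition staircases :: "pt set" where
  "staircases = {staircase r1 r2 r3 | r1 r2 r3. r1 \<le> r2 \<and> r2 \<le> r3 \<and> r3 \<le> m}"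

lemma staircases_subset: "staircases \<subseteq> stage_polytope 0"
  unfolding staircases_def using staircase_in_stage_polytope by auto

lemma finite_staircases: "finite staircases"
proof -
  have "staircase r1 r2 r3 \<in> (\<lambda>(r1, r2, r3). staircase r1 r2 r3) ` ({..m} \<times> {..m} \<times> {..m})"
    if "r1 \<le> r2" "r2 \<le> r3" "r3 \<le> m" for r1 r2 r3
    using that by (intro rev_image_eqI[of "(r1, r2, r3)"]) auto
  then have "staircases \<subseteq> (\<lambda>(r1, r2, r3). staircase r1 r2 r3) ` ({..m} \<times> {..m} \<times> {..m})"
    unfolding staircases_def by blast
  then show ?thesis
    by (rule finite_subset) simp
qed

lemma zero_one_decreasing_row:
  assumes "zero_one p" "\<And>i i'. i \<le> i' \<Longrightarrow> i' < m \<Longrightarrow> coord p (a + i') \<le> coord p (a + i)"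
  obtains r where "r \<le> m" "\<And>i. i < m \<Longrightarrow> coord p (a + i) = of_bool (i < r)"
proof
  define r where "r = (LEAST i. \<not> (i < m \<and> coord p (a + i) = 1))"
  show "r \<le> m"
    unfolding r_def by (rule Least_le) simp
  have not_one: "\<not> (r < m \<and> coord p (a + r) = 1)"
    unfolding r_def by (rule LeastI[of _ m]) simp
  fix i assume "i < m"
  show "coord p (a + i) = of_bool (i < r)"
  proof (cases "i < r")
    case True
    then show ?thesis
      using \<open>i < m\<close> not_less_Least[of i] by (auto simp: r_def)
  next
    case False
    then have "coord p (a + i) \<le> coord p (a + r)" "coord p (a + r) \<noteq> 1"
      using assms(2)[of r i] not_one \<open>i < m\<close> by auto
    then show ?thesis
      using False assms(1) by (metis of_bool_eq(1) zero_one_def zero_neq_one order_antisym_conv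
          zero_le_one)
  qed
qed

lemma zero_one_stage_polytope_0:
  assumes "p \<in> stage_polytope 0" "zero_one p"
  shows "p \<in> staircases"
proof -
  have p_rsp: "p \<in> rsp (3 * m)"
    and decr: "\<And>i i'. i \<le> i' \<Longrightarrow> i' < m \<Longrightarrow> coord p (0 + i') \<le> coord p (0 + i) \<and>
                 coord p (m + i') \<le> coord p (m + i) \<and> coord p (2 * m + i') \<le> coord p (2 * m + i)"
    and yz: "\<And>i. i < m \<Longrightarrow> coord p (m + i) \<le> coord p (2 * m + i)"
    and xy: "\<And>i. i < m \<Longrightarrow> coord p i \<le> coord p (m + i)"
    using assms(1) by (auto simp: mem_stage_polytope)
  obtain r1 where r1: "r1 \<le> m" "\<And>i. i < m \<Longrightarrow> coord p (0 + i) = of_bool (i < r1)"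
    using zero_one_decreasing_row[OF assms(2)] decr by blast
  obtain r2 where r2: "r2 \<le> m" "\<And>i. i < m \<Longrightarrow> coord p (m + i) = of_bool (i < r2)"
    using zero_one_decreasing_row[OF assms(2)] decr by blast
  obtain r3 where r3: "r3 \<le> m" "\<And>i. i < m \<Longrightarrow> coord p (2 * m + i) = of_bool (i < r3)"
    using zero_one_decreasing_row[OF assms(2)] decr by blast
  have "r1 \<le> r2"
    using xy[of r2] r1(2)[of r2] r2(2)[of r2] r1(1) by (cases "r2 < m") (auto simp: of_bool_def split: if_splits)
  moreover have "r2 \<le> r3"
    using yz[of r3] r2(2)[of r3] r3(2)[of r3] r2(1) by (cases "r3 < m") (auto simp: of_bool_def split: if_splits)
  moreover have "p = staircase r1 r2 r3"
    using p_rsp r1(2) r2(2) r3(2)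
    by (intro rsp_three_rows_eqI[where n = m]) (auto simp: coord_staircase staircase_def)
  ultimately show ?thesis
    unfolding staircases_def using r3(1) by blast
qed

lemma stage_polytope_eq_hull:
  assumes j: "j \<le> m"
  shows "stage_polytope j = convex hull (mut_iter j ` staircases)"
proof
  have "mut_iter j ` staircases \<subseteq> stage_polytope j"
    using stage_polytope_eq_image[OF j] staircases_subset by auto
  then show "convex hull (mut_iter j ` staircases) \<subseteq> stage_polytope j"
    by (rule hull_minimal) (rule convex_stage_polytope)
next
  show "stage_polytope j \<subseteq> convex hull (mut_iter j ` staircases)"
  proof
    fix u assume "u \<in> stage_polytope j"
    then obtain u0 where u0: "u0 \<in> stage_polytope 0" "u = mut_iter j u0"
      using stage_polytope_eq_image[OF j] by auto
    define S where "S = {p \<in> stage_polytope 0. zero_one p \<and> comonotone u0 p}"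
    have u0_S: "u0 \<in> convex hull S"
      using order_polytope_hull_comonotone u0(1) by (simp add: S_def stage_polytope_0)
    have S: "S \<subseteq> staircases"
      using zero_one_stage_polytope_0 by (auto simp: S_def)
    define neg where "neg k \<longleftrightarrow> gap k u0 < 0" for k
    have lin: "mut_iter j x = mut_iter_lin neg j x" if "x \<in> convex hull S" for x
    proof (rule mut_iter_eq_lin[OF j])
      fix k
      have "\<And>a b. coord u0 a \<le> coord u0 b \<Longrightarrow> coord x a \<le> coord x b"
        using comonotone_hull[OF that] by (auto simp: S_def)
      then show "(neg k \<longrightarrow> gap k x \<le> 0) \<and> (\<not> neg k \<longrightarrow> 0 \<le> gap k x)"
        by (auto simp: neg_def gap_def)
    qed
    have "u = mut_iter_lin neg j u0"
      using u0(2) lin[OF u0_S] by simp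
    also have "\<dots> \<in> convex hull (mut_iter_lin neg j ` S)"
      using u0_S by (simp add: convex_hull_linear_image[OF linear_mut_iter_lin, symmetric])
    also have "mut_iter_lin neg j ` S = mut_iter j ` S"
      using lin hull_subset by (force intro!: image_cong)
    also have "convex hull (mut_iter j ` S) \<subseteq> convex hull (mut_iter j ` staircases)"
      using S by (intro hull_mono image_mono)
    finally show "u \<in> convex hull (mut_iter j ` staircases)" .
  qed
qed

lemma intpt_mut_iter:
  assumes "intpt u" "j \<le> m"
  shows "intpt (mut_iter j u)"
proof -
  have "min 0 (gap k u) \<in> \<int>" for k
    using assms(1) by (simp add: intpt_def gap_def min_def)
  moreover have "coord (y_prefix k) i \<in> \<int>" for k i
    by (simp add: y_prefix_def)
  ultimately show ?thesis
    using assms(1) unfolding intpt_def mut_iter_eq_sum[OF assms(2)]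
    by (auto intro!: Ints_add Ints_sum Ints_mult)
qed

lemma zero_one_intpt: "zero_one p \<Longrightarrow> intpt p"
  unfolding zero_one_def intpt_def by (metis Ints_0 Ints_1)

lemma staircase_zero_one: "zero_one (staircase r1 r2 r3)"
  by (simp add: zero_one_def staircase_def)

lemma lattice_polytope_stage_polytope:
  assumes j: "j \<le> m"
  shows "lattice_polytope_in (3 * m) (stage_polytope j)"
  unfolding lattice_polytope_in_def
proof (intro exI conjI)
  show "finite (mut_iter j ` staircases)"
    using finite_staircases by simp
  show "mut_iter j ` staircases \<noteq> {}"
    using staircase_in_stage_polytope[of 0 0 0 0] by (auto simp: staircases_def)
  show "mut_iter j ` staircases \<subseteq> lat (3 * m)"
  proof
    fix x assume "x \<in> mut_iter j ` staircases"
    then obtain p where p: "p \<in> staircases" "x = mut_iter j p"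
      by blast
    then have "x \<in> stage_polytope j"
      using stage_polytope_eq_image[OF j] staircases_subset by blast
    moreover have "intpt x"
      using p j by (auto simp: staircases_def intro!: intpt_mut_iter zero_one_intpt[OF staircase_zero_one])
    ultimately show "x \<in> lat (3 * m)"
      by (simp add: lat_def mem_stage_polytope)
  qed
qed (rule stage_polytope_eq_hull[OF j])

lemma unit_eq_staircase_diff:
  assumes "i < m"
  shows "Poly_Mapping.single i 1 = staircase (Suc i) m m - staircase i m m"
    and "Poly_Mapping.single (m + i) 1 = staircase 0 (Suc i) m - staircase 0 i m"
    and "Poly_Mapping.single (2 * m + i) 1 = staircase 0 0 (Suc i) - staircase 0 0 i"
  using assms by (auto intro!: poly_mapping_eqI simp: staircase_def lookup_single when_def)

lemma alat_stage_polytope: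
  assumes j: "j < m"
  shows "alat (stage_polytope j) = lat (3 * m)"
proof
  show "alat (stage_polytope j) \<subseteq> lat (3 * m)"
    by (rule alat_subset_lat) (auto simp: mem_stage_polytope)
  have stair: "staircase r1 r2 r3 \<in> alat (stage_polytope j)"
    if "r1 \<le> r2" "r2 \<le> r3" "r3 \<le> m" "r1 = 0 \<or> r2 = m" for r1 r2 r3
    using that j
    by (intro in_alat zero_one_intpt[OF staircase_zero_one] staircase_in_stage_polytope) auto
  have zero: "0 \<in> alat (stage_polytope j)"
    using stair[of 0 0 0] by (simp add: staircase_0_0_0)
  show "lat (3 * m) \<subseteq> alat (stage_polytope j)"
  proof (rule lat_subset_alat[OF zero])
    fix k assume "k < 3 * m"
    then show "Poly_Mapping.single k 1 \<in> alat (stage_polytope j)"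
    proof (cases rule: three_rows_cases)
      case (x i)
      then show ?thesis
        using alat_diff[OF zero stair stair] unit_eq_staircase_diff(1) by simp
    next
      case (y i)
      then show ?thesis
        using alat_diff[OF zero stair stair] unit_eq_staircase_diff(2) by simp
    next
      case (z i)
      then show ?thesis
        using alat_diff[OF zero stair stair] unit_eq_staircase_diff(3) by simp
    qed
  qed
qed

definition gap_vec :: "nat \<Rightarrow> pt" where
  "gap_vec k = (if Suc k < m then Poly_Mapping.single (m + Suc k) 1 else 0) - Poly_Mapping.single k 1"

lemma pair_gap_vec:
  assumes "k < m" "u \<in> rsp (3 * m)"
  shows "pair (3 * m) (gap_vec k) u = gap k u"
proof -
  have "pair (3 * m) (gap_vec k) u
      = (\<Sum>i<3 * m. (if Suc k < m \<and> i = m + Suc k then coord u i else 0) - (if i = k then coord u i else 0))"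
    unfolding pair_def gap_vec_def by (intro sum.cong) (auto simp: lookup_single when_def)
  also have "\<dots> = gap k u"
    using assms by (simp add: sum_subtractf sum.delta' gap_def coord_next_y)
  finally show ?thesis .
qed

lemma gap_vec_in_lat: "k < m \<Longrightarrow> gap_vec k \<in> lat (3 * m)"
  by (auto simp: gap_vec_def lat_def rsp_def intpt_def lookup_single when_def)

lemma trop_map_eq_mut:
  "k < m \<Longrightarrow> u \<in> rsp (3 * m) \<Longrightarrow> trop_map (3 * m) (- y_prefix k) (convex hull {0, gap_vec k}) u = mut k u"
  by (simp add: trop_map_segment pair_gap_vec mut_def)

lemma comb_mutation_stage_polytope:
  assumes k: "k < m"
  shows "comb_mutation (3 * m) (stage_polytope k) (stage_polytope (Suc k))"
  unfolding comb_mutation_def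
proof (intro conjI exI)
  have y_prefix: "- y_prefix k \<in> lat (3 * m)" "coord (- y_prefix k) m = -1"
    using k by (auto simp: lat_def intpt_def y_prefix_def rsp_def)
  show "lattice_polytope_in (3 * m) (stage_polytope k)"
    using k by (intro lattice_polytope_stage_polytope) simp
  show "0 \<in> stage_polytope k"
    using staircase_in_stage_polytope[of 0 0 0 k] k by (simp add: staircase_0_0_0)
  show "primitive (3 * m) (- y_prefix k)"
    using y_prefix by (intro primitive_if_unit_coord[where i = m]) auto
  show "lattice_polytope_in (3 * m) (convex hull {0, gap_vec k})"
    using k by (intro lattice_polytope_segment gap_vec_in_lat)
  have "pair (3 * m) (gap_vec k) (- y_prefix k) = 0"
    using y_prefix(1) k by (simp add: pair_gap_vec lat_def gap_def coord_y_prefix next_y_def)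
  then show "\<forall>f\<in>convex hull {0, gap_vec k}. pair (3 * m) f (- y_prefix k) = 0"
    using pair_segment_eq_0 by blast
  show "stage_polytope (Suc k) = trop_map (3 * m) (- y_prefix k) (convex hull {0, gap_vec k}) ` stage_polytope k"
    using stage_polytope_Suc[OF k] trop_map_eq_mut[OF k] stage_rsp by (auto intro!: image_cong)
  then show "convex (trop_map (3 * m) (- y_prefix k) (convex hull {0, gap_vec k}) ` stage_polytope k)"
    using convex_stage_polytope by metis
qed

lemma mutation_step_stage_polytope: "k < m \<Longrightarrow> mutation_step (stage_polytope k) (stage_polytope (Suc k))"
  unfolding mutation_step_def using alat_stage_polytope comb_mutation_stage_polytope unimod_equiv_refl by blast

end

section \<open>Matching field polytopes\<close>

lemma card_3_subset_eq:
  fixes I :: "nat set"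
  assumes "I \<subseteq> {0..<n}" "card I = 3"
  obtains a b c where "a < b" "b < c" "c < n" "I = {a, b, c}"
proof -
  have "finite I"
    using assms(2) by (intro card_ge_0_finite) simp
  obtain a b c where l: "sorted_list_of_set I = [a, b, c]"
    using assms(2) by (auto simp: numeral_3_eq_3 length_Suc_conv simp flip: length_sorted_list_of_set)
  have "sorted_wrt (<) [a, b, c]"
    using strict_sorted_list_of_set[of I] by (simp only: l)
  moreover have "I = {a, b, c}"
    using set_sorted_list_of_set[OF \<open>finite I\<close>] by (simp add: l)
  ultimately show ?thesis
    using that assms(1) by auto
qed

lemma mf_vertex_triple:
  "a < b \<Longrightarrow> b < c \<Longrightarrow> mf_vertex n \<sigma> {a, b, c} = emat n (\<sigma> 0) a + emat n (\<sigma> 1) b + emat n (\<sigma> 2) c"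
  by (simp add: mf_vertex_def eval_nat_numeral lessThan_Suc add_ac)

lemma matching_field_polytope_triples:
  "matching_field_polytope n \<Lambda> =
     convex hull {mf_vertex n (\<Lambda> {a, b, c}) {a, b, c} | a b c. a < b \<and> b < c \<and> c < n}"
proof -
  have "{mf_vertex n (\<Lambda> I) I | I. I \<subseteq> {0..<n} \<and> card I = 3}
      = {mf_vertex n (\<Lambda> {a, b, c}) {a, b, c} | a b c. a < b \<and> b < c \<and> c < n}"
  proof (intro equalityI subsetI)
    fix v assume "v \<in> {mf_vertex n (\<Lambda> I) I | I. I \<subseteq> {0..<n} \<and> card I = 3}"
    then obtain I where I: "I \<subseteq> {0..<n}" "card I = 3" "v = mf_vertex n (\<Lambda> I) I"
      by blast
    then obtain a b c where "a < b" "b < c" "c < n" "I = {a, b, c}"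
      by (elim card_3_subset_eq)
    then show "v \<in> {mf_vertex n (\<Lambda> {a, b, c}) {a, b, c} | a b c. a < b \<and> b < c \<and> c < n}"
      using I(3) by blast
  qed force
  then show ?thesis
    by (simp add: matching_field_polytope_def)
qed

lemma lat_add: "x \<in> lat N \<Longrightarrow> y \<in> lat N \<Longrightarrow> x + y \<in> lat N"
  by (auto simp: lat_def rsp_def intpt_def)

lemma emat_in_lat:
  assumes "i < 3" "j < n"
  shows "emat n i j \<in> lat (3 * n)"
proof -
  have "i * n + j < Suc i * n"
    using assms by simp
  also have "\<dots> \<le> 3 * n"
    using assms by (intro mult_le_mono1) simp
  finally show ?thesis
    by (auto simp: emat_def lat_def rsp_def intpt_def lookup_single when_def)
qed

lemma lattice_polytope_matching_field_polytope:
  assumes "3 \<le> n" "\<And>I r. r < 3 \<Longrightarrow> \<Lambda> I r < 3"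
  shows "lattice_polytope (matching_field_polytope n \<Lambda>)"
proof -
  define V where "V = {mf_vertex n (\<Lambda> I) I | I. I \<subseteq> {0..<n} \<and> card I = 3}"
  have "V = (\<lambda>I. mf_vertex n (\<Lambda> I) I) ` {I. I \<subseteq> {0..<n} \<and> card I = 3}"
    by (auto simp: V_def)
  then have "finite V"
    by simp
  moreover have "mf_vertex n (\<Lambda> {0, 1, 2}) {0, 1, 2} \<in> V"
    using assms(1) unfolding V_def by (intro CollectI exI[of _ "{0, 1, 2}"]) auto
  moreover have "V \<subseteq> lat (3 * n)"
  proof
    fix v assume "v \<in> V"
    then obtain I where I: "I \<subseteq> {0..<n}" "card I = 3" "v = mf_vertex n (\<Lambda> I) I"
      by (auto simp: V_def)
    then obtain a b c where abc: "a < b" "b < c" "c < n" "I = {a, b, c}"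
      by (elim card_3_subset_eq)
    then show "v \<in> lat (3 * n)"
      using I(3) assms(2)[of 0 I] assms(2)[of 1 I] assms(2)[of 2 I]
      by (simp add: mf_vertex_triple lat_add emat_in_lat)
  qed
  ultimately show ?thesis
    unfolding lattice_polytope_def lattice_polytope_in_def matching_field_polytope_def V_def[symmetric]
    by blast
qed

lemma block_mf_less_3: "r < 3 \<Longrightarrow> block_mf l I r < 3"
  by (auto simp: block_mf_def Transposition.transpose_def)

section \<open>Tail-sum coordinates\<close>

context
  fixes m :: nat
begin

definition triple_pt :: "nat \<Rightarrow> nat \<Rightarrow> nat \<Rightarrow> pt" where
  "triple_pt p q r = emat (m + 3) 0 p + emat (m + 3) 1 q + emat (m + 3) 2 r"

lemma coord_triple_pt:
  "coord (triple_pt p q r) k = of_bool (k = p) + of_bool (k = m + 3 + q) + of_bool (k = 2 * (m + 3) + r)"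
  by (auto simp: triple_pt_def emat_def lookup_single when_def)

lemma triple_pt_in_lat: "p < m + 3 \<Longrightarrow> q < m + 3 \<Longrightarrow> r < m + 3 \<Longrightarrow> triple_pt p q r \<in> lat (3 * (m + 3))"
  by (auto simp: lat_def rsp_def intpt_def coord_triple_pt)

definition tail_sum :: "pt \<Rightarrow> nat \<Rightarrow> nat \<Rightarrow> real" where
  "tail_sum x b t = (\<Sum>j\<in>{Suc t..<m + 3}. coord x (b * (m + 3) + j))"

lemma tail_sum_triple_pt:
  assumes "p < m + 3" "q < m + 3" "r < m + 3"
  shows "tail_sum (triple_pt p q r) 0 t = of_bool (t < p)"
    and "tail_sum (triple_pt p q r) 1 t = of_bool (t < q)"
    and "tail_sum (triple_pt p q r) 2 t = of_bool (t < r)"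
  using assms by (simp_all add: tail_sum_def coord_triple_pt sum.distrib)

definition encode :: "nat \<Rightarrow> nat \<Rightarrow> nat \<Rightarrow> pt \<Rightarrow> pt" where
  "encode s0 s1 s2 x = pt_of (\<lambda>k. if k < m then tail_sum x 0 (s0 + k)
                                   else if k < 2 * m then tail_sum x 1 (s1 + (k - m))
                                   else tail_sum x 2 (s2 + (k - 2 * m))) (3 * m)"

lemma encode_triple_pt:
  assumes "p < m + 3" "q < m + 3" "r < m + 3"
  shows "encode s0 s1 s2 (triple_pt p q r) = staircase m (p - s0) (q - s1) (r - s2)"
proof (rule rsp_three_rows_eqI[where n = m])
  show "encode s0 s1 s2 (triple_pt p q r) \<in> rsp (3 * m)" "staircase m (p - s0) (q - s1) (r - s2) \<in> rsp (3 * m)"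
    by (simp_all add: encode_def staircase_def)
  fix i assume "i < m"
  have shift: "(s + i < t) = (i < t - s)" for s t :: nat
    by auto
  from \<open>i < m\<close> show "coord (encode s0 s1 s2 (triple_pt p q r)) i = coord (staircase m (p - s0) (q - s1) (r - s2)) i \<and>
    coord (encode s0 s1 s2 (triple_pt p q r)) (m + i) = coord (staircase m (p - s0) (q - s1) (r - s2)) (m + i) \<and>
    coord (encode s0 s1 s2 (triple_pt p q r)) (2 * m + i) = coord (staircase m (p - s0) (q - s1) (r - s2)) (2 * m + i)"
    by (simp add: encode_def tail_sum_triple_pt[OF assms, unfolded One_nat_def] coord_staircase shift)
qed

lemma linear_encode: "linear (encode s0 s1 s2)"
  by (rule linearI; intro poly_mapping_eqI)
     (simp_all add: encode_def tail_sum_def sum.distrib sum_distrib_left)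

lemma intpt_encode: "intpt x \<Longrightarrow> intpt (encode s0 s1 s2 x)"
  unfolding intpt_def by (auto simp: encode_def tail_sum_def intro!: Ints_sum)

text \<open>An affine inverse of \<open>encode\<close>: column \<open>j\<close> of a row is the difference of the reconstructed
  tail sums at \<open>j\<close> and \<open>j + 1\<close>. The permutation \<open>\<pi>\<close> of the middle row's columns realises the
  transposition used by \<open>block_mf 1\<close>.\<close>

definition decoded_tail :: "pt \<Rightarrow> nat \<Rightarrow> nat \<Rightarrow> nat \<Rightarrow> real" where
  "decoded_tail y b s t = (if t \<le> s then 1 else if t \<le> s + m then coord y (b * m + (t - Suc s)) else 0)"

definition decoded_col :: "pt \<Rightarrow> nat \<Rightarrow> nat \<Rightarrow> nat \<Rightarrow> real" where
  "decoded_col y b s j = decoded_tail y b s j - decoded_tail y b s (Suc j)"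

definition decode :: "nat \<Rightarrow> (nat \<Rightarrow> nat) \<Rightarrow> pt \<Rightarrow> pt" where
  "decode s0 \<pi> y = pt_of (\<lambda>k. if k < m + 3 then decoded_col y 0 s0 k
                             else if k < 2 * (m + 3) then decoded_col y 1 1 (\<pi> (k - (m + 3)))
                             else decoded_col y 2 2 (k - 2 * (m + 3))) (3 * (m + 3))"

lemma decoded_col_staircase_row:
  assumes "r \<le> m" "\<And>i. i < m \<Longrightarrow> coord y (b * m + i) = of_bool (i < r)"
  shows "decoded_col y b s j = of_bool (j = r + s)"
proof -
  have "decoded_tail y b s t = of_bool (t \<le> r + s)" for t
  proof (cases "s < t \<and> t \<le> s + m")
    case True
    define i where "i = t - Suc s"
    have i: "t = Suc s + i" "i < m"
      using True by (auto simp: i_def)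
    then show ?thesis
      using assms(2)[OF i(2)] by (simp add: decoded_tail_def)
  next
    case False
    then show ?thesis
      using assms(1) by (auto simp: decoded_tail_def)
  qed
  then show ?thesis
    by (simp add: decoded_col_def)
qed

lemma decode_staircase:
  assumes "r1 \<le> m" "r2 \<le> m" "r3 \<le> m" "s0 \<le> 2" "\<And>c. \<pi> (\<pi> c) = c" "\<pi> (Suc r2) < m + 3"
  shows "decode s0 \<pi> (staircase m r1 r2 r3) = triple_pt (r1 + s0) (\<pi> (Suc r2)) (Suc (Suc r3))"
proof (rule rsp_three_rows_eqI[where n = "m + 3"])
  show "decode s0 \<pi> (staircase m r1 r2 r3) \<in> rsp (3 * (m + 3))"
    by (simp add: decode_def)
  show "triple_pt (r1 + s0) (\<pi> (Suc r2)) (Suc (Suc r3)) \<in> rsp (3 * (m + 3))"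
    using assms triple_pt_in_lat[of "r1 + s0" "\<pi> (Suc r2)" "Suc (Suc r3)"] by (simp add: lat_def)
  have col: "decoded_col (staircase m r1 r2 r3) 0 s j = of_bool (j = r1 + s)"
    "decoded_col (staircase m r1 r2 r3) (Suc 0) s j = of_bool (j = r2 + s)"
    "decoded_col (staircase m r1 r2 r3) 2 s j = of_bool (j = r3 + s)" for s j
    by (intro decoded_col_staircase_row; use assms in \<open>simp add: coord_staircase\<close>)+
  have "(\<pi> c = Suc r2) = (c = \<pi> (Suc r2))" for c
    using assms(5) by metis
  then show "coord (decode s0 \<pi> (staircase m r1 r2 r3)) i = coord (triple_pt (r1 + s0) (\<pi> (Suc r2)) (Suc (Suc r3))) i \<and>
    coord (decode s0 \<pi> (staircase m r1 r2 r3)) (m + 3 + i) = coord (triple_pt (r1 + s0) (\<pi> (Suc r2)) (Suc (Suc r3))) (m + 3 + i) \<and>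
    coord (decode s0 \<pi> (staircase m r1 r2 r3)) (2 * (m + 3) + i) = coord (triple_pt (r1 + s0) (\<pi> (Suc r2)) (Suc (Suc r3))) (2 * (m + 3) + i)"
    if "i < m + 3" for i
    using that assms by (simp add: decode_def col coord_triple_pt)
qed

lemma decoded_col_add:
  "decoded_col (x + y) b s j = decoded_col x b s j + decoded_col y b s j - decoded_col 0 b s j"
  by (simp add: decoded_col_def decoded_tail_def)

lemma decoded_col_scaleR:
  "decoded_col (c *\<^sub>R x) b s j = c * decoded_col x b s j + (1 - c) * decoded_col 0 b s j"
  by (simp add: decoded_col_def decoded_tail_def algebra_simps)

lemma coord_decode_add:
  "coord (decode s0 \<pi> (x + y)) k = coord (decode s0 \<pi> x) k + coord (decode s0 \<pi> y) k - coord (decode s0 \<pi> 0) k"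
  by (simp add: decode_def decoded_col_add)

lemma coord_decode_scaleR:
  "coord (decode s0 \<pi> (c *\<^sub>R x)) k = c * coord (decode s0 \<pi> x) k + (1 - c) * coord (decode s0 \<pi> 0) k"
  by (simp add: decode_def decoded_col_scaleR)

lemma affine_map_decode: "affine_map (decode s0 \<pi>)"
  unfolding affine_map_def
  by (rule linearI; intro poly_mapping_eqI;
      simp only: lookup_add lookup_minus lookup_scaleR coord_decode_add coord_decode_scaleR;
      simp add: algebra_simps)

lemma intpt_decode: "intpt y \<Longrightarrow> intpt (decode s0 \<pi> y)"
  unfolding intpt_def by (simp add: decode_def decoded_col_def decoded_tail_def)

lemma mf_vertex_block_mf_0:
  "a < b \<Longrightarrow> b < c \<Longrightarrow> mf_vertex (m + 3) (block_mf 0 {a, b, c}) {a, b, c} = triple_pt a b c"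
  by (simp add: mf_vertex_triple block_mf_def triple_pt_def)

lemma mf_vertex_block_mf_1:
  assumes "a < b" "b < c"
  shows "mf_vertex (m + 3) (block_mf 1 {a, b, c}) {a, b, c} =
           (if a = 0 then triple_pt b 0 c else triple_pt a b c)"
proof -
  have "{a, b, c} \<inter> {0..<1} = (if a = 0 then {0} else {})"
    using assms by auto
  then show ?thesis
    using assms by (auto simp: mf_vertex_triple block_mf_def triple_pt_def Transposition.transpose_def add_ac)
qed

lemma min_gap_staircase:
  assumes "r1 \<le> r2" "r2 \<le> m" "k < m"
  shows "min 0 (gap m k (staircase m r1 r2 r3)) = (if r1 = r2 \<and> k = r2 - 1 \<and> 0 < r2 then -1 else 0)"
  using assms by (auto simp: gap_def coord_staircase)

lemma mut_iter_staircase: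
  assumes "r1 \<le> r2" "r2 \<le> r3" "r3 \<le> m"
  shows "mut_iter m m (staircase m r1 r2 r3) = staircase m r1 (if r1 = r2 then 0 else r2) r3"
proof -
  let ?S = "staircase m r1 r2 r3"
  have "(\<Sum>k<m. min 0 (gap m k ?S) *\<^sub>R y_prefix m k)
      = (\<Sum>k<m. if k = r2 - 1 then (if r1 = r2 \<and> 0 < r2 then - y_prefix m k else 0) else 0)"
    using assms by (intro sum.cong) (auto simp: min_gap_staircase)
  also have "\<dots> = (if r1 = r2 \<and> 0 < r2 then - y_prefix m (r2 - 1) else 0)"
    using assms by (auto simp: sum.delta')
  finally have "mut_iter m m ?S = ?S + (if r1 = r2 \<and> 0 < r2 then - y_prefix m (r2 - 1) else 0)"
    by (simp add: mut_iter_eq_sum)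
  also have "\<dots> = staircase m r1 (if r1 = r2 then 0 else r2) r3"
    using assms by (intro poly_mapping_eqI) (auto simp: staircase_def y_prefix_def)
  finally show ?thesis .
qed

definition block_mf_0_vertices :: "pt set" where
  "block_mf_0_vertices = {triple_pt a b c | a b c. a < b \<and> b < c \<and> c < m + 3}"

lemma matching_field_polytope_block_mf_0:
  "matching_field_polytope (m + 3) (block_mf 0) = convex hull block_mf_0_vertices"
  unfolding matching_field_polytope_triples block_mf_0_vertices_def
  by (intro arg_cong[where f = "\<lambda>S. convex hull S"] Collect_cong ex_cong1) (auto simp: mf_vertex_block_mf_0)

lemma block_mf_0_vertex_encode:
  assumes "a < b" "b < c" "c < m + 3"
  shows "encode 0 1 2 (triple_pt a b c) \<in> staircases m"
    and "decode 0 id (encode 0 1 2 (triple_pt a b c)) = triple_pt a b c"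
proof -
  have "encode 0 1 2 (triple_pt a b c) = staircase m a (b - 1) (c - 2)"
    using assms by (simp add: encode_triple_pt)
  moreover have "a \<le> b - 1" "b - 1 \<le> c - 2" "c - 2 \<le> m" "Suc (b - 1) = b" "Suc (Suc (c - 2)) = c"
    using assms by linarith+
  ultimately show "encode 0 1 2 (triple_pt a b c) \<in> staircases m"
    and "decode 0 id (encode 0 1 2 (triple_pt a b c)) = triple_pt a b c"
    by (auto simp: staircases_def decode_staircase)
qed

lemma staircase_decode_0:
  assumes "r1 \<le> r2" "r2 \<le> r3" "r3 \<le> m"
  shows "decode 0 id (staircase m r1 r2 r3) \<in> block_mf_0_vertices"
    and "encode 0 1 2 (decode 0 id (staircase m r1 r2 r3)) = staircase m r1 r2 r3"
proof -
  have "decode 0 id (staircase m r1 r2 r3) = triple_pt r1 (Suc r2) (Suc (Suc r3))"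
    using assms by (simp add: decode_staircase)
  moreover have "r1 < Suc r2" "Suc r2 < Suc (Suc r3)" "Suc (Suc r3) < m + 3"
    using assms by simp_all
  ultimately show "decode 0 id (staircase m r1 r2 r3) \<in> block_mf_0_vertices"
    and "encode 0 1 2 (decode 0 id (staircase m r1 r2 r3)) = staircase m r1 r2 r3"
    unfolding block_mf_0_vertices_def by (blast, simp add: encode_triple_pt)
qed

lemma unimod_equiv_block_mf_0_stage_polytope:
  "unimod_equiv (matching_field_polytope (m + 3) (block_mf 0)) (stage_polytope m 0)"
  unfolding matching_field_polytope_block_mf_0 stage_polytope_eq_hull[OF le0] mut_iter.simps(1) image_ident
proof (rule unimod_equiv_by_affine_inverses)
  show "affine_map (encode 0 1 2)" "affine_map (decode 0 id)"
    by (simp_all add: affine_map_if_linear linear_encode affine_map_decode)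
  show "intpt x \<Longrightarrow> intpt (encode 0 1 2 x)" "intpt y \<Longrightarrow> intpt (decode 0 id y)" for x y
    by (simp_all add: intpt_encode intpt_decode)
  show "encode 0 1 2 ` block_mf_0_vertices \<subseteq> convex hull staircases m"
    using block_mf_0_vertex_encode(1) by (force simp: block_mf_0_vertices_def intro: hull_inc)
  show "decode 0 id (encode 0 1 2 v) = v" if "v \<in> block_mf_0_vertices" for v
    using that block_mf_0_vertex_encode(2) by (auto simp: block_mf_0_vertices_def)
  show "decode 0 id ` staircases m \<subseteq> convex hull block_mf_0_vertices"
    using staircase_decode_0(1) by (force simp: staircases_def intro: hull_inc)
  show "encode 0 1 2 (decode 0 id w) = w" if "w \<in> staircases m" for w
    using that staircase_decode_0(2) by (auto simp: staircases_def)
qed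

abbreviation swap01 :: "nat \<Rightarrow> nat" where
  "swap01 \<equiv> Transposition.transpose 0 1"

definition block_mf_1_vertices :: "pt set" where
  "block_mf_1_vertices =
     {if a = 0 then triple_pt b 0 c else triple_pt a b c | a b c. a < b \<and> b < c \<and> c < m + 3}"

lemma block_mf_1_verticesI:
  "0 < b \<Longrightarrow> b < c \<Longrightarrow> c < m + 3 \<Longrightarrow> triple_pt b 0 c \<in> block_mf_1_vertices"
  "0 < a \<Longrightarrow> a < b \<Longrightarrow> b < c \<Longrightarrow> c < m + 3 \<Longrightarrow> triple_pt a b c \<in> block_mf_1_vertices"
  unfolding block_mf_1_vertices_def
  by (rule CollectI, rule exI[of _ 0], rule exI[of _ b], rule exI[of _ c], simp)
     (rule CollectI, rule exI[of _ a], rule exI[of _ b], rule exI[of _ c], simp)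

lemma matching_field_polytope_block_mf_1:
  "matching_field_polytope (m + 3) (block_mf 1) = convex hull block_mf_1_vertices"
  unfolding matching_field_polytope_triples block_mf_1_vertices_def
  by (intro arg_cong[where f = "\<lambda>S. convex hull S"] Collect_cong ex_cong1) (auto simp: mf_vertex_block_mf_1[unfolded One_nat_def])

lemma decode_staircase_1:
  "r1 \<le> m \<Longrightarrow> r2 \<le> m \<Longrightarrow> r3 \<le> m \<Longrightarrow>
     decode 1 swap01 (staircase m r1 r2 r3) = triple_pt (Suc r1) (if r2 = 0 then 0 else Suc r2) (Suc (Suc r3))"
  by (simp add: decode_staircase Transposition.transpose_def)

lemma block_mf_1_vertex_encode:
  assumes "a < b" "b < c" "c < m + 3"
  defines "w \<equiv> if a = 0 then triple_pt b 0 c else triple_pt a b c"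
  shows "encode 1 1 2 w \<in> mut_iter m m ` staircases m" "decode 1 swap01 (encode 1 1 2 w) = w"
proof -
  have "Suc (b - 1) = b" "Suc (Suc (c - 2)) = c" "b - 1 \<le> m" "c - 2 \<le> m"
    using assms by linarith+
  moreover have "a - 1 \<le> b - 1" "b - 1 \<le> c - 2"
    using assms by linarith+
  moreover have "0 < a \<Longrightarrow> Suc (a - 1) = a \<and> a - 1 \<noteq> b - 1 \<and> b - 1 \<noteq> 0"
    using assms by linarith
  ultimately have "encode 1 1 2 w = mut_iter m m (staircase m (if a = 0 then b - 1 else a - 1) (b - 1) (c - 2))"
    and "decode 1 swap01 (encode 1 1 2 w) = w"
    using assms by (auto simp: w_def encode_triple_pt mut_iter_staircase decode_staircase_1[unfolded One_nat_def])
  moreover have "staircase m (if a = 0 then b - 1 else a - 1) (b - 1) (c - 2) \<in> staircases m"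
    using assms unfolding staircases_def by (intro CollectI) (auto intro!: exI)
  ultimately show "encode 1 1 2 w \<in> mut_iter m m ` staircases m" "decode 1 swap01 (encode 1 1 2 w) = w"
    by auto
qed

lemma mut_iter_staircase_decode:
  assumes "r1 \<le> r2" "r2 \<le> r3" "r3 \<le> m"
  shows "decode 1 swap01 (mut_iter m m (staircase m r1 r2 r3)) \<in> block_mf_1_vertices"
    and "encode 1 1 2 (decode 1 swap01 (mut_iter m m (staircase m r1 r2 r3))) = mut_iter m m (staircase m r1 r2 r3)"
proof -
  note decode = decode_staircase_1[unfolded One_nat_def]
  show "encode 1 1 2 (decode 1 swap01 (mut_iter m m (staircase m r1 r2 r3))) = mut_iter m m (staircase m r1 r2 r3)"
    using assms by (simp add: mut_iter_staircase decode encode_triple_pt)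
  show "decode 1 swap01 (mut_iter m m (staircase m r1 r2 r3)) \<in> block_mf_1_vertices"
    using assms by (auto simp: mut_iter_staircase decode intro: block_mf_1_verticesI)
qed

lemma unimod_equiv_stage_polytope_block_mf_1:
  "unimod_equiv (stage_polytope m m) (matching_field_polytope (m + 3) (block_mf 1))"
  unfolding matching_field_polytope_block_mf_1 stage_polytope_eq_hull[OF order.refl]
proof (rule unimod_equiv_by_affine_inverses)
  show "affine_map (decode 1 swap01)" "affine_map (encode 1 1 2)"
    by (simp_all add: affine_map_if_linear linear_encode affine_map_decode)
  show "intpt x \<Longrightarrow> intpt (decode 1 swap01 x)" "intpt y \<Longrightarrow> intpt (encode 1 1 2 y)" for x y
    by (simp_all add: intpt_encode intpt_decode)
  show "decode 1 swap01 ` mut_iter m m ` staircases m \<subseteq> convex hull block_mf_1_vertices"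
    using mut_iter_staircase_decode(1) by (force simp: staircases_def intro: hull_inc)
  show "encode 1 1 2 (decode 1 swap01 v) = v" if "v \<in> mut_iter m m ` staircases m" for v
    using that mut_iter_staircase_decode(2) by (auto simp: staircases_def)
  show "encode 1 1 2 ` block_mf_1_vertices \<subseteq> convex hull (mut_iter m m ` staircases m)"
    using block_mf_1_vertex_encode(1) by (force simp: block_mf_1_vertices_def intro: hull_inc)
  show "decode 1 swap01 (encode 1 1 2 w) = w" if "w \<in> block_mf_1_vertices" for w
    using that block_mf_1_vertex_encode(2) by (auto simp: block_mf_1_vertices_def)
qed

end

lemma mutation_sequence_equiv_block_mf_0_stage_polytope:
  assumes "k \<le> m"
  shows "mutation_sequence_equiv (matching_field_polytope (m + 3) (block_mf 0)) (stage_polytope m k)"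
  using assms
proof (induction k)
  case 0
  have "lattice_polytope (matching_field_polytope (m + 3) (block_mf 0))"
    by (intro lattice_polytope_matching_field_polytope block_mf_less_3) simp
  moreover have "lattice_polytope (stage_polytope m 0)"
    using lattice_polytope_stage_polytope[of 0 m] by (auto simp: lattice_polytope_def)
  ultimately show ?case
    using unimod_equiv_block_mf_0_stage_polytope[of m]
    by (auto simp: related_def intro!: mutation_sequence_equiv_snoc[OF mutation_sequence_equiv_refl])
next
  case (Suc k)
  have "lattice_polytope (stage_polytope m (Suc k))"
    using lattice_polytope_stage_polytope[of "Suc k" m] Suc.prems by (auto simp: lattice_polytope_def)
  moreover have "related (stage_polytope m k) (stage_polytope m (Suc k))"
    using mutation_step_stage_polytope[of k m] Suc.prems by (simp add: related_def)
  ultimately show ?case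
    using Suc by (metis mutation_sequence_equiv_snoc Suc_leD)
qed

theorem theorem3p4:
  fixes n :: nat
  assumes "n \<ge> 3"
  shows "mutation_sequence_equiv (matching_field_polytope n (block_mf 0))
                                 (matching_field_polytope n (block_mf 1))"
proof -
  obtain m where n: "n = m + 3"
    using assms le_Suc_ex by (metis add.commute)
  have "mutation_sequence_equiv (matching_field_polytope n (block_mf 0)) (stage_polytope m m)"
    unfolding n by (rule mutation_sequence_equiv_block_mf_0_stage_polytope) simp
  moreover have "related (stage_polytope m m) (matching_field_polytope n (block_mf 1))"
    unfolding n related_def using unimod_equiv_stage_polytope_block_mf_1 by blast
  moreover have "lattice_polytope (matching_field_polytope n (block_mf 1))"
    using assms by (intro lattice_polytope_matching_field_polytope block_mf_less_3)
  ultimately show ?thesis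
    by (rule mutation_sequence_equiv_snoc)
qed

end
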